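(* For every $m\in\mathbb Z$, \[ \mathcal A=\bigcap_{k\in\mathbb Z}\mathcal T_k=\mathcal T_{m-1}\cap\mathcal T_m\cap\mathcal T_{m+1},\qquad\text{where }\mathcal T_k=\mathbb Z[\mathbb P][x_k^{\pm1},x_{k+1}^{\pm1}]. \]
   Context: Fix positive integers $\ell_1,\ell_2$ and independent variables $p_{i,k}$ ($i=1,2$, $1\le k\le\ell_i$), $p_{i,0}=1$. Let $\mathbb P$ be the group of Laurent monomials in the $p_{i,k}$ and $\mathbb Z[\mathbb P]$ its group ring; $\mathcal F=\mathbb Q(p_{i,k})(x_1,x_2)$ with $x_1,x_2$ independent. Put $P_1(z)=1+\sum_{k=1}^{\ell_1}p_{1,k}z^k$, $P_2(z)=1+\sum_{k=1}^{\ell_2}p_{2,k}z^k$, $\overline P_i(z)=z^{\ell_i}P_i(z^{-1})/p_{i,\ell_i}$. Define $x_k\in\mathcal F$ for all $k\in\mathbb Z$ from $x_1,x_2$ by $x_{k+1}x_{k-1}=P_1(x_k)$ if $k\equiv1$, $P_2(x_k)$ if $k\equiv2$, $\overline P_1(x_k)$ if $k\equiv3$, $\overline P_2(x_k)$ if $k\equiv0\pmod4$. Let $\mathcal A$ be the $\mathbb Z[\mathbb P]$-subalgebra of $\mathcal F$ generated by all $x_k$. *)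

theory Defs
  imports Complex_Main
begin

text \<open>Indeterminates: p_{1,k}, p_{2,k} and x_1, x_2.\<close>
datatype cvar = PV1 nat | PV2 nat | XV1 | XV2

definition cvars :: "nat \<Rightarrow> nat \<Rightarrow> cvar set" where
  "cvars l1 l2 = PV1 ` {1..l1} \<union> PV2 ` {1..l2} \<union> {XV1, XV2}"

fun cval :: "(nat \<Rightarrow> 'a) \<Rightarrow> (nat \<Rightarrow> 'a) \<Rightarrow> 'a \<Rightarrow> 'a \<Rightarrow> cvar \<Rightarrow> 'a" where
  "cval p1 p2 y1 y2 (PV1 k) = p1 k"
| "cval p1 p2 y1 y2 (PV2 k) = p2 k"
| "cval p1 p2 y1 y2 XV1 = y1"
| "cval p1 p2 y1 y2 XV2 = y2"

definition mono_eval :: "('i \<Rightarrow> 'a::comm_ring_1) \<Rightarrow> ('i \<Rightarrow> nat) \<Rightarrow> 'a" where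
  "mono_eval v e = (\<Prod>i\<in>{i. e i \<noteq> 0}. v i ^ e i)"

definition alg_indep_Q :: "'i set \<Rightarrow> ('i \<Rightarrow> 'a::field_char_0) \<Rightarrow> bool" where
  "alg_indep_Q I v \<longleftrightarrow>
     (\<forall>S c. finite S \<and> (\<forall>e\<in>S. finite {i. e i \<noteq> 0} \<and> {i. e i \<noteq> 0} \<subseteq> I) \<and>
            (\<Sum>e\<in>S. of_rat (c e) * mono_eval v e) = 0 \<longrightarrow> (\<forall>e\<in>S. c e = (0::rat)))"

text \<open>P(z) = 1 + sum_{k=1}^l p_k z^k and Pbar(z) = z^l P(1/z) / p_l (as a polynomial, p_0 = 1).\<close>
definition Ppol :: "nat \<Rightarrow> (nat \<Rightarrow> 'a::field) \<Rightarrow> 'a \<Rightarrow> 'a" where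
  "Ppol l p z = 1 + (\<Sum>k=1..l. p k * z ^ k)"

definition Pbar :: "nat \<Rightarrow> (nat \<Rightarrow> 'a::field) \<Rightarrow> 'a \<Rightarrow> 'a" where
  "Pbar l p z = (z ^ l + (\<Sum>k=1..l. p k * z ^ (l - k))) / p l"

definition exch :: "nat \<Rightarrow> nat \<Rightarrow> (nat \<Rightarrow> 'a::field) \<Rightarrow> (nat \<Rightarrow> 'a) \<Rightarrow> int \<Rightarrow> 'a \<Rightarrow> 'a" where
  "exch l1 l2 p1 p2 k z =
     (if k mod 4 = 1 then Ppol l1 p1 z
      else if k mod 4 = 2 then Ppol l2 p2 z
      else if k mod 4 = 3 then Pbar l1 p1 z
      else Pbar l2 p2 z)"

text \<open>Forward: pairs (x_{n+1}, x_{n+2}); backward: pairs (x_{1-n}, x_{2-n}).\<close>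
fun xfwd :: "nat \<Rightarrow> nat \<Rightarrow> (nat \<Rightarrow> 'a::field) \<Rightarrow> (nat \<Rightarrow> 'a) \<Rightarrow> 'a \<Rightarrow> 'a \<Rightarrow> nat \<Rightarrow> 'a \<times> 'a" where
  "xfwd l1 l2 p1 p2 y1 y2 0 = (y1, y2)"
| "xfwd l1 l2 p1 p2 y1 y2 (Suc n) =
     (let (a, b) = xfwd l1 l2 p1 p2 y1 y2 n
      in (b, exch l1 l2 p1 p2 (int n + 2) b / a))"

fun xbwd :: "nat \<Rightarrow> nat \<Rightarrow> (nat \<Rightarrow> 'a::field) \<Rightarrow> (nat \<Rightarrow> 'a) \<Rightarrow> 'a \<Rightarrow> 'a \<Rightarrow> nat \<Rightarrow> 'a \<times> 'a" where
  "xbwd l1 l2 p1 p2 y1 y2 0 = (y1, y2)"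
| "xbwd l1 l2 p1 p2 y1 y2 (Suc n) =
     (let (a, b) = xbwd l1 l2 p1 p2 y1 y2 n
      in (exch l1 l2 p1 p2 (1 - int n) a / b, a))"

text \<open>The cluster variables x_k, k in Z, with x_{k+1} x_{k-1} = (exchange polynomial)(x_k).\<close>
definition xseq :: "nat \<Rightarrow> nat \<Rightarrow> (nat \<Rightarrow> 'a::field) \<Rightarrow> (nat \<Rightarrow> 'a) \<Rightarrow> 'a \<Rightarrow> 'a \<Rightarrow> int \<Rightarrow> 'a" where
  "xseq l1 l2 p1 p2 y1 y2 k =
     (if k \<ge> 1 then fst (xfwd l1 l2 p1 p2 y1 y2 (nat (k - 1)))
      else fst (xbwd l1 l2 p1 p2 y1 y2 (nat (1 - k))))"

text \<open>The Z[P]-subalgebra generated by G, where Z[P] is the group ring of Laurent monomials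
  in the p_{i,k}: the subring generated by 1, the p_{i,k}^{+-1} and G.\<close>
inductive_set zp_alg :: "nat \<Rightarrow> nat \<Rightarrow> (nat \<Rightarrow> 'a::field) \<Rightarrow> (nat \<Rightarrow> 'a) \<Rightarrow> 'a set \<Rightarrow> 'a set"
  for l1 l2 p1 p2 G where
  gen: "g \<in> G \<Longrightarrow> g \<in> zp_alg l1 l2 p1 p2 G"
| one: "1 \<in> zp_alg l1 l2 p1 p2 G"
| par1: "1 \<le> k \<Longrightarrow> k \<le> l1 \<Longrightarrow> p1 k \<in> zp_alg l1 l2 p1 p2 G"
| par1i: "1 \<le> k \<Longrightarrow> k \<le> l1 \<Longrightarrow> inverse (p1 k) \<in> zp_alg l1 l2 p1 p2 G"
| par2: "1 \<le> k \<Longrightarrow> k \<le> l2 \<Longrightarrow> p2 k \<in> zp_alg l1 l2 p1 p2 G"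
| par2i: "1 \<le> k \<Longrightarrow> k \<le> l2 \<Longrightarrow> inverse (p2 k) \<in> zp_alg l1 l2 p1 p2 G"
| neg: "a \<in> zp_alg l1 l2 p1 p2 G \<Longrightarrow> - a \<in> zp_alg l1 l2 p1 p2 G"
| add: "a \<in> zp_alg l1 l2 p1 p2 G \<Longrightarrow> b \<in> zp_alg l1 l2 p1 p2 G \<Longrightarrow> a + b \<in> zp_alg l1 l2 p1 p2 G"
| mult: "a \<in> zp_alg l1 l2 p1 p2 G \<Longrightarrow> b \<in> zp_alg l1 l2 p1 p2 G \<Longrightarrow> a * b \<in> zp_alg l1 l2 p1 p2 G"

definition clusterA :: "nat \<Rightarrow> nat \<Rightarrow> (nat \<Rightarrow> 'a::field) \<Rightarrow> (nat \<Rightarrow> 'a) \<Rightarrow> 'a \<Rightarrow> 'a \<Rightarrow> 'a set" where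
  "clusterA l1 l2 p1 p2 y1 y2 = zp_alg l1 l2 p1 p2 (range (xseq l1 l2 p1 p2 y1 y2))"

definition Tk :: "nat \<Rightarrow> nat \<Rightarrow> (nat \<Rightarrow> 'a::field) \<Rightarrow> (nat \<Rightarrow> 'a) \<Rightarrow> 'a \<Rightarrow> 'a \<Rightarrow> int \<Rightarrow> 'a set" where
  "Tk l1 l2 p1 p2 y1 y2 k =
     (let x = xseq l1 l2 p1 p2 y1 y2
      in zp_alg l1 l2 p1 p2 {x k, inverse (x k), x (k + 1), inverse (x (k + 1))})"

end

theory Submission
  imports Defs "HOL-Computational_Algebra.Polynomial"
begin

(* Let R be the ring generated by the p_{i,k} and their inverses. Consecutive cluster variables
   x_m, x_{m+1} are algebraically independent over R: for x_1, x_2 this is the hypothesis once the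
   denominators of R are cleared, and each exchange relation x_{m+1} x_{m-1} = P(x_m) propagates it.
   The exchange relations together with the reflection identity z^l P(1/z) = p_l Pbar(z) give
   x_{k+j} in T_k for -3 <= j <= 4, so S_m = R[x_{m-1}, x_m, x_{m+1}, x_{m+2}] lies in
   T_{m-2}, ..., T_{m+2}.

   Conversely, let y lie in T_{m-1}, T_m and T_{m+1}, and write y = Q(a,b) / (a^L b^M) with a = x_m,
   b = x_{m+1}, c = x_{m-1} = F(a)/b and d = x_{m+2} = G(b)/a. Since y is also a Laurent polynomial
   in (d, b), comparing coefficients shows that G^L divides the coefficient of a^0 in Q; this allows
   one to subtract an element of S_m and lower L. For L = 0 the same argument with (c, a) lowers M.
   Hence the triple intersection equals S_m; comparing m with m + 1 shows that S_m is independent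
   of m, so it is the algebra A, and it is contained in every T_k. *)


section \<open>Subrings\<close>

definition subring :: "'a::comm_ring_1 set \<Rightarrow> bool" where
  "subring S \<longleftrightarrow> 1 \<in> S \<and> (\<forall>x\<in>S. - x \<in> S) \<and> (\<forall>x\<in>S. \<forall>y\<in>S. x + y \<in> S \<and> x * y \<in> S)"

lemma subring_one: "subring S \<Longrightarrow> 1 \<in> S"
  and subring_uminus: "subring S \<Longrightarrow> x \<in> S \<Longrightarrow> - x \<in> S"
  and subring_add: "subring S \<Longrightarrow> x \<in> S \<Longrightarrow> y \<in> S \<Longrightarrow> x + y \<in> S"
  and subring_mult: "subring S \<Longrightarrow> x \<in> S \<Longrightarrow> y \<in> S \<Longrightarrow> x * y \<in> S"
  by (simp_all add: subring_def)

lemma subring_zero: "subring S \<Longrightarrow> 0 \<in> S"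
  using subring_add[of S 1 "- 1"] by (simp add: subring_one subring_uminus)

lemma subring_diff: "subring S \<Longrightarrow> x \<in> S \<Longrightarrow> y \<in> S \<Longrightarrow> x - y \<in> S"
  unfolding diff_conv_add_uminus by (intro subring_add subring_uminus)

lemma subring_power: "subring S \<Longrightarrow> x \<in> S \<Longrightarrow> x ^ n \<in> S"
  by (induction n) (simp_all add: subring_one subring_mult)

lemma subring_sum: "subring S \<Longrightarrow> (\<And>i. i \<in> A \<Longrightarrow> f i \<in> S) \<Longrightarrow> sum f A \<in> S"
  by (induction A rule: infinite_finite_induct) (simp_all add: subring_zero subring_add)

lemma subring_prod: "subring S \<Longrightarrow> (\<And>i. i \<in> A \<Longrightarrow> f i \<in> S) \<Longrightarrow> prod f A \<in> S"
  by (induction A rule: infinite_finite_induct) (simp_all add: subring_one subring_mult)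

lemma subring_divide:
  fixes u w :: "'a::field"
  shows "subring S \<Longrightarrow> u \<in> S \<Longrightarrow> inverse w \<in> S \<Longrightarrow> u / w \<in> S"
  unfolding divide_inverse by (rule subring_mult)

lemma subring_zp_alg: "subring (zp_alg l1 l2 p1 p2 G)"
  unfolding subring_def by (auto intro: zp_alg.intros)

lemma zp_alg_empty_subset: "zp_alg l1 l2 p1 p2 {} \<subseteq> zp_alg l1 l2 p1 p2 G"
proof
  show "r \<in> zp_alg l1 l2 p1 p2 G" if "r \<in> zp_alg l1 l2 p1 p2 {}" for r
    using that by (induction rule: zp_alg.induct) (auto intro: zp_alg.intros)
qed

lemma zp_alg_least:
  assumes "subring S" "G \<subseteq> S" "zp_alg l1 l2 p1 p2 {} \<subseteq> S"
  shows "zp_alg l1 l2 p1 p2 G \<subseteq> S"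
proof
  fix r assume "r \<in> zp_alg l1 l2 p1 p2 G"
  then show "r \<in> S"
  proof (induction rule: zp_alg.induct)
    case (par1 k) then show ?case using assms(3) zp_alg.par1 by blast
  next
    case (par1i k) then show ?case using assms(3) zp_alg.par1i by blast
  next
    case (par2 k) then show ?case using assms(3) zp_alg.par2 by blast
  next
    case (par2i k) then show ?case using assms(3) zp_alg.par2i by blast
  qed (use assms(1,2) in \<open>auto intro: subring_one subring_uminus subring_add subring_mult\<close>)
qed

lemma zp_alg_mono: "G \<subseteq> G' \<Longrightarrow> zp_alg l1 l2 p1 p2 G \<subseteq> zp_alg l1 l2 p1 p2 G'"
  by (rule zp_alg_least[OF subring_zp_alg]) (auto intro: zp_alg.gen zp_alg_empty_subset[THEN subsetD])


section \<open>Polynomials with coefficients in a subring\<close>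

definition polys_over :: "'a::comm_ring_1 set \<Rightarrow> 'a poly set" where
  "polys_over S = {q. \<forall>i. coeff q i \<in> S}"

lemma coeff_in_polys_over: "q \<in> polys_over S \<Longrightarrow> coeff q i \<in> S"
  by (simp add: polys_over_def)

lemma pCons_in_polys_over_iff: "pCons c q \<in> polys_over S \<longleftrightarrow> c \<in> S \<and> q \<in> polys_over S"
  by (auto simp: polys_over_def coeff_pCons split: nat.split)

lemma subring_polys_over: "subring S \<Longrightarrow> subring (polys_over S)"
  unfolding subring_def[of "polys_over S"]
  by (auto simp: polys_over_def coeff_mult coeff_1 subring_one subring_zero
      intro!: subring_uminus subring_add subring_sum subring_mult)

lemma monom_in_polys_over: "subring S \<Longrightarrow> c \<in> S \<Longrightarrow> monom c n \<in> polys_over S"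
  by (simp add: polys_over_def coeff_monom subring_zero)

lemma smult_in_polys_over: "subring S \<Longrightarrow> c \<in> S \<Longrightarrow> q \<in> polys_over S \<Longrightarrow> smult c q \<in> polys_over S"
  by (simp add: polys_over_def subring_mult)

lemma X_in_polys_over: "subring S \<Longrightarrow> [:0, 1:] \<in> polys_over S"
  by (simp add: pCons_in_polys_over_iff subring_zero subring_one subring_polys_over)

lemma poly_in_subring:
  "subring S \<Longrightarrow> R \<subseteq> S \<Longrightarrow> q \<in> polys_over R \<Longrightarrow> z \<in> S \<Longrightarrow> poly q z \<in> S"
  by (auto simp: poly_altdef polys_over_def intro!: subring_sum subring_mult subring_power)

lemma power_eq_pCons_one:
  assumes "subring R" "F \<in> polys_over R" "coeff F 0 = 1"
  shows "\<exists>\<phi> \<in> polys_over R. F ^ n = pCons 1 \<phi>"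
proof -
  obtain c0 \<phi> where F: "F ^ n = pCons c0 \<phi>" by (cases "F ^ n")
  have "F ^ n \<in> polys_over R" using assms by (intro subring_power subring_polys_over)
  moreover have "c0 = 1" using arg_cong[OF F, of "\<lambda>p. coeff p 0"] assms(3) by (simp add: coeff_0_power)
  ultimately show ?thesis using F by (auto simp: pCons_in_polys_over_iff)
qed

lemma map_poly_const_in_polys_over:
  "subring R \<Longrightarrow> p \<in> polys_over R \<Longrightarrow> map_poly (\<lambda>c. [:c:]) p \<in> polys_over (polys_over R)"
  by (auto simp: polys_over_def coeff_map_poly coeff_pCons subring_zero split: nat.split)

lemma polys_over_cancel_left:
  assumes R: "subring R" and V: "V \<in> polys_over R" "coeff V 0 = 1" and Vg: "V * g \<in> polys_over R"
  shows "g \<in> polys_over R"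
proof -
  have "coeff g n \<in> R" for n
  proof (induction n rule: less_induct)
    case (less n)
    show ?case
    proof (cases n)
      case 0
      then show ?thesis using coeff_in_polys_over[OF Vg, of 0] V(2) by (simp add: coeff_mult)
    next
      case (Suc n')
      have "coeff (V * g) n = (\<Sum>i\<le>Suc n'. coeff V i * coeff g (Suc n' - i))"
        by (simp add: coeff_mult Suc)
      also have "\<dots> = coeff g n + (\<Sum>i\<le>n'. coeff V (Suc i) * coeff g (n' - i))"
        by (subst sum.atMost_Suc_shift) (simp add: V(2) Suc)
      finally have "coeff (V * g) n = coeff g n + (\<Sum>i\<le>n'. coeff V (Suc i) * coeff g (n' - i))" .
      then have "coeff g n = coeff (V * g) n - (\<Sum>i\<le>n'. coeff V (Suc i) * coeff g (n' - i))"
        by simp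
      moreover have "(\<Sum>i\<le>n'. coeff V (Suc i) * coeff g (n' - i)) \<in> R"
        using Suc by (intro subring_sum subring_mult R coeff_in_polys_over[OF V(1)] less) auto
      ultimately show ?thesis by (simp add: subring_diff R coeff_in_polys_over[OF Vg])
    qed
  qed
  then show ?thesis by (simp add: polys_over_def)
qed

lemma poly_add_arg_in_subring:
  assumes S: "subring S" "R \<subseteq> S" and q: "q \<in> polys_over R" and st: "s \<in> S" "t \<in> S"
  shows "\<exists>w\<in>S. poly q (s + t) = poly q s + t * w"
  using q
proof (induction q rule: pCons_induct)
  case 0
  show ?case using subring_zero[OF S(1)] by (intro bexI[of _ 0]) simp_all
next
  case (pCons c q)
  then have q: "q \<in> polys_over R" by (simp add: pCons_in_polys_over_iff)
  then obtain w where w: "w \<in> S" "poly q (s + t) = poly q s + t * w" using pCons.IH by blast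
  have "s * w + poly q (s + t) \<in> S"
    using S q st w(1) by (intro subring_add subring_mult poly_in_subring[of S R]) auto
  moreover have "poly (pCons c q) (s + t) = poly (pCons c q) s + t * (s * w + poly q (s + t))"
    using w(2) by (simp add: algebra_simps)
  ultimately show ?case by blast
qed

lemma dvd_of_dvd_X_mult:
  fixes W q :: "'a::idom poly"
  assumes W: "poly W 0 \<noteq> 0" and dvd: "W dvd [:0, 1:] * q"
  shows "W dvd q"
proof -
  obtain h where h: "[:0, 1:] * q = W * h" using dvd by (rule dvdE)
  obtain c h' where h': "h = pCons c h'" by (cases h)
  have "poly W 0 * c = 0" using arg_cong[OF h, of "\<lambda>p. poly p 0"] h' by auto
  then have "h = [:0, 1:] * h'" using W h' by simp
  then have "q = W * h'" using h by (simp add: mult.left_commute)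
  then show ?thesis by simp
qed

lemma dvd_of_dvd_X_power_mult:
  fixes W q :: "'a::idom poly"
  assumes "poly W 0 \<noteq> 0" "W dvd [:0, 1:] ^ n * q"
  shows "W dvd q"
  using assms(2)
proof (induction n)
  case (Suc n)
  then show ?case using dvd_of_dvd_X_mult[OF assms(1), of "[:0, 1:] ^ n * q"] by (simp add: mult.assoc)
qed simp


section \<open>Bivariate polynomials\<close>

text \<open>A bivariate polynomial is an element of \<open>'a poly poly\<close>; the outer variable is
  evaluated at \<open>s\<close>, the inner one at \<open>t\<close>.\<close>

definition poly2 :: "'a::comm_ring_1 poly poly \<Rightarrow> 'a \<Rightarrow> 'a \<Rightarrow> 'a" where
  "poly2 Q s t = poly (map_poly (\<lambda>q. poly q t) Q) s"

lemma poly2_0 [simp]: "poly2 0 s t = 0"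
  by (simp add: poly2_def)

lemma poly2_pCons [simp]: "poly2 (pCons q Q) s t = poly q t + s * poly2 Q s t"
  by (simp add: poly2_def map_poly_pCons)

lemma poly2_add [simp]: "poly2 (P + Q) s t = poly2 P s t + poly2 Q s t"
  by (induction P Q rule: poly_induct2) (simp_all add: algebra_simps)

lemma poly2_smult [simp]: "poly2 (smult q Q) s t = poly q t * poly2 Q s t"
  by (induction Q) (simp_all add: algebra_simps)

lemma poly2_mult [simp]: "poly2 (P * Q) s t = poly2 P s t * poly2 Q s t"
  by (induction P) (simp_all add: algebra_simps)

lemma poly2_minus [simp]: "poly2 (- Q) s t = - poly2 Q s t"
  by (induction Q) (simp_all add: algebra_simps)

lemma poly2_diff [simp]: "poly2 (P - Q) s t = poly2 P s t - poly2 Q s t"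
  using poly2_add[of P "- Q" s t] by simp

lemma poly2_monom [simp]: "poly2 (monom q n) s t = poly q t * s ^ n"
  by (induction n) (simp_all add: monom_Suc monom_0)

lemma poly2_1 [simp]: "poly2 1 s t = 1"
  using poly2_monom[of 1 0] by simp

lemma poly2_sum: "poly2 (sum f A) s t = (\<Sum>i\<in>A. poly2 (f i) s t)"
  by (induction A rule: infinite_finite_induct) simp_all

lemma poly2_map_poly_const: "poly2 (map_poly (\<lambda>c. [:c:]) p) s t = poly p s"
  by (simp add: poly2_def map_poly_map_poly o_def)

lemma poly_bounded_sum: "degree q \<le> N \<Longrightarrow> poly q z = (\<Sum>j\<le>N. coeff q j * z ^ j)"
  for q :: "'a::comm_semiring_1 poly"
proof -
  assume "degree q \<le> N"
  then have "poly q z = poly (\<Sum>j\<le>N. monom (coeff q j) j) z"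
    by (simp only: poly_as_sum_of_monoms')
  then show ?thesis by (simp add: poly_sum poly_monom)
qed

lemma poly2_bounded_sum: "degree Q \<le> N \<Longrightarrow> poly2 Q s t = (\<Sum>i\<le>N. poly (coeff Q i) t * s ^ i)"
proof -
  assume "degree Q \<le> N"
  then have "poly2 Q s t = poly2 (\<Sum>i\<le>N. monom (coeff Q i) i) s t"
    by (simp only: poly_as_sum_of_monoms')
  then show ?thesis by (simp add: poly2_sum)
qed

lemma poly2_in_subring:
  assumes "subring S" "R \<subseteq> S" "Q \<in> polys_over (polys_over R)" "s \<in> S" "t \<in> S"
  shows "poly2 Q s t \<in> S"
  using assms by (auto simp: poly2_bounded_sum[OF order.refl] coeff_in_polys_over
      intro!: subring_sum subring_mult subring_power poly_in_subring[of S R])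

definition inner_degree :: "'a::zero poly poly \<Rightarrow> nat" where
  "inner_degree Q = Max ((\<lambda>i. degree (coeff Q i)) ` {..degree Q})"

lemma degree_coeff_le_inner_degree: "degree (coeff Q i) \<le> inner_degree Q"
  by (cases "i \<le> degree Q") (auto simp: inner_degree_def coeff_eq_0)

lemma poly2_double_sum:
  "poly2 Q s t = (\<Sum>i\<le>degree Q. \<Sum>j\<le>inner_degree Q. coeff (coeff Q i) j * s ^ i * t ^ j)"
  by (simp add: poly2_bounded_sum[OF order.refl] poly_bounded_sum[OF degree_coeff_le_inner_degree]
      sum_distrib_left sum_distrib_right mult_ac)

lemma bipoly_eqI: "(\<And>i j. coeff (coeff Q i) j = 0) \<Longrightarrow> Q = 0"
  by (metis coeff_0 poly_eqI)

definition swap_vars :: "'a::comm_ring_1 poly poly \<Rightarrow> 'a poly poly" where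
  "swap_vars Q = (\<Sum>i\<le>degree Q. \<Sum>j\<le>inner_degree Q. monom (monom (coeff (coeff Q i) j) i) j)"

lemma coeff_swap_vars: "coeff (coeff (swap_vars Q) j) i = coeff (coeff Q i) j"
proof -
  have "coeff (coeff (swap_vars Q) j) i =
      (\<Sum>i'\<le>degree Q. if j \<le> inner_degree Q \<and> i' = i then coeff (coeff Q i') j else 0)"
    by (auto simp: swap_vars_def coeff_sum coeff_monom intro!: sum.cong)
  also have "\<dots> = (if i \<le> degree Q \<and> j \<le> inner_degree Q then coeff (coeff Q i) j else 0)"
    by (auto simp: sum.delta)
  also have "\<dots> = coeff (coeff Q i) j"
    using degree_coeff_le_inner_degree[of Q i] by (auto simp: coeff_eq_0)
  finally show ?thesis .
qed

lemma swap_vars_eq_0_iff [simp]: "swap_vars Q = 0 \<longleftrightarrow> Q = 0"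
  by (metis bipoly_eqI coeff_swap_vars coeff_0)

lemma poly2_swap_vars: "poly2 (swap_vars Q) t s = poly2 Q s t"
proof -
  have "poly2 (swap_vars Q) t s =
      (\<Sum>i\<le>degree Q. \<Sum>j\<le>inner_degree Q. coeff (coeff Q i) j * s ^ i * t ^ j)"
    by (simp add: swap_vars_def poly2_sum poly_monom mult_ac)
  then show ?thesis
    by (simp only: poly2_double_sum)
qed

lemma swap_vars_in_polys_over:
  "subring R \<Longrightarrow> Q \<in> polys_over (polys_over R) \<Longrightarrow> swap_vars Q \<in> polys_over (polys_over R)"
  unfolding swap_vars_def
  by (intro subring_sum subring_polys_over monom_in_polys_over)
    (auto simp: coeff_in_polys_over)


section \<open>Algebraic independence of two elements over a subring\<close>

definition alg_indep2 :: "'a::comm_ring_1 set \<Rightarrow> 'a \<Rightarrow> 'a \<Rightarrow> bool" where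
  "alg_indep2 R s t \<longleftrightarrow> (\<forall>Q \<in> polys_over (polys_over R). poly2 Q s t = 0 \<longrightarrow> Q = 0)"

lemma alg_indep2D:
  "alg_indep2 R s t \<Longrightarrow> Q \<in> polys_over (polys_over R) \<Longrightarrow> poly2 Q s t = 0 \<Longrightarrow> Q = 0"
  by (simp add: alg_indep2_def)

lemma alg_indep2_commute:
  assumes "subring R" "alg_indep2 R s t"
  shows "alg_indep2 R t s"
  unfolding alg_indep2_def
proof (intro ballI impI)
  fix Q assume "Q \<in> polys_over (polys_over R)" "poly2 Q t s = 0"
  then have "swap_vars Q = 0"
    using assms by (intro alg_indep2D[of R s t]) (simp_all add: swap_vars_in_polys_over poly2_swap_vars)
  then show "Q = 0" by simp
qed

lemma alg_indep2_poly_nonzero: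
  assumes "subring R" "alg_indep2 R s t" "q \<in> polys_over R" "q \<noteq> 0"
  shows "poly q t \<noteq> 0"
proof
  assume "poly q t = 0"
  moreover have "[:q:] \<in> polys_over (polys_over R)"
    using assms(1,3) by (simp add: pCons_in_polys_over_iff subring_zero subring_polys_over)
  ultimately have "[:q:] = 0" using assms(2) by (intro alg_indep2D) simp_all
  then show False using assms(4) by simp
qed

lemma alg_indep2_nonzero:
  assumes "subring R" "alg_indep2 R s t"
  shows "s \<noteq> 0" "t \<noteq> 0"
  using alg_indep2_poly_nonzero[OF assms X_in_polys_over[OF assms(1)]]
    alg_indep2_poly_nonzero[OF assms(1) alg_indep2_commute[OF assms] X_in_polys_over[OF assms(1)]]
  by simp_all

definition recip_subst :: "nat \<Rightarrow> 'a::comm_ring_1 poly \<Rightarrow> 'a poly poly \<Rightarrow> 'a poly poly" where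
  "recip_subst N W Q = (\<Sum>j\<le>N. monom (coeff Q j * W ^ j) (N - j))"

lemma poly2_recip_subst:
  fixes s t :: "'a::field"
  assumes "degree Q \<le> N" "s \<noteq> 0"
  shows "poly2 (recip_subst N W Q) s t = s ^ N * poly2 Q (poly W t / s) t"
proof -
  have "poly2 (recip_subst N W Q) s t = (\<Sum>j\<le>N. poly (coeff Q j) t * poly W t ^ j * s ^ (N - j))"
    by (simp add: recip_subst_def poly2_sum)
  also have "\<dots> = (\<Sum>j\<le>N. s ^ N * (poly (coeff Q j) t * (poly W t / s) ^ j))"
    using assms(2) by (intro sum.cong refl) (simp add: power_divide power_diff)
  also have "\<dots> = s ^ N * poly2 Q (poly W t / s) t"
    by (simp add: poly2_bounded_sum[OF assms(1)] sum_distrib_left)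
  finally show ?thesis .
qed

lemma coeff_recip_subst: "j \<le> N \<Longrightarrow> coeff (recip_subst N W Q) (N - j) = coeff Q j * W ^ j"
proof -
  assume "j \<le> N"
  then have "coeff (recip_subst N W Q) (N - j) = (\<Sum>j'\<le>N. if j' = j then coeff Q j' * W ^ j' else 0)"
    unfolding recip_subst_def coeff_sum coeff_monom by (intro sum.cong) auto
  with \<open>j \<le> N\<close> show ?thesis by simp
qed

lemma recip_subst_in_polys_over:
  "subring R \<Longrightarrow> W \<in> polys_over R \<Longrightarrow> Q \<in> polys_over (polys_over R) \<Longrightarrow>
    recip_subst N W Q \<in> polys_over (polys_over R)"
  unfolding recip_subst_def
  by (intro subring_sum subring_polys_over monom_in_polys_over subring_mult subring_power)
    (auto simp: coeff_in_polys_over)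

lemma alg_indep2_exchange:
  fixes a b :: "'a::field"
  assumes R: "subring R" and ind: "alg_indep2 R a b" and G: "G \<in> polys_over R" "G \<noteq> 0"
  shows "alg_indep2 R (poly G b / a) b"
  unfolding alg_indep2_def
proof (intro ballI impI)
  fix Q assume Q: "Q \<in> polys_over (polys_over R)" "poly2 Q (poly G b / a) b = 0"
  have "a \<noteq> 0" using alg_indep2_nonzero[OF R ind] by simp
  with Q have "poly2 (recip_subst (degree Q) G Q) a b = 0"
    by (simp add: poly2_recip_subst)
  then have "recip_subst (degree Q) G Q = 0"
    using Q(1) by (intro alg_indep2D[OF ind] recip_subst_in_polys_over R G(1))
  then have "coeff Q j = 0" if "j \<le> degree Q" for j
    using coeff_recip_subst[OF that, of G Q] G(2) by simp
  then show "Q = 0"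
    by (metis leading_coeff_0_iff order.refl)
qed


section \<open>Laurent polynomials in two elements\<close>

definition laurent_polys :: "'a::field set \<Rightarrow> 'a \<Rightarrow> 'a \<Rightarrow> 'a set" where
  "laurent_polys R s t =
     {poly2 Q s t / (s ^ L * t ^ M) | Q L M. Q \<in> polys_over (polys_over R)}"

lemma laurent_polysI:
  "Q \<in> polys_over (polys_over R) \<Longrightarrow> poly2 Q s t / (s ^ L * t ^ M) \<in> laurent_polys R s t"
  unfolding laurent_polys_def by blast

lemma laurent_polysE:
  assumes "y \<in> laurent_polys R s t"
  obtains Q L M where "Q \<in> polys_over (polys_over R)" "y = poly2 Q s t / (s ^ L * t ^ M)"
  using assms unfolding laurent_polys_def by blast

lemma poly2_divide_add:
  fixes s t :: "'a::field"
  assumes "s \<noteq> 0" "t \<noteq> 0"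
  shows "poly2 P s t / (s ^ L * t ^ M) + poly2 Q s t / (s ^ L * t ^ N) =
    poly2 (smult ([:0, 1:] ^ N) P + smult ([:0, 1:] ^ M) Q) s t / (s ^ L * t ^ (M + N))"
  using assms by (simp add: field_simps power_add)

lemma laurent_polys_add:
  fixes s t :: "'a::field"
  assumes R: "subring R" and st: "s \<noteq> 0" "t \<noteq> 0"
    and x: "x \<in> laurent_polys R s t" and y: "y \<in> laurent_polys R s t"
  shows "x + y \<in> laurent_polys R s t"
proof -
  have RR: "subring (polys_over (polys_over R))"
    using R by (intro subring_polys_over)
  have X: "[:0, 1:] ^ n \<in> polys_over R" "monom 1 n \<in> polys_over (polys_over R)" for n
    using R by (simp_all add: subring_power X_in_polys_over monom_in_polys_over subring_one
        subring_polys_over)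
  obtain P L M where P: "P \<in> polys_over (polys_over R)" "x = poly2 P s t / (s ^ L * t ^ M)"
    using x by (rule laurent_polysE)
  obtain Q L' M' where Q: "Q \<in> polys_over (polys_over R)" "y = poly2 Q s t / (s ^ L' * t ^ M')"
    using y by (rule laurent_polysE)
  have "x + y = poly2 (monom 1 L' * P) s t / (s ^ (L + L') * t ^ M)
      + poly2 (monom 1 L * Q) s t / (s ^ (L + L') * t ^ M')"
    using st by (simp add: P(2) Q(2) poly_monom power_add)
  also have "\<dots> \<in> laurent_polys R s t"
    unfolding poly2_divide_add[OF st]
    using R P(1) Q(1) X by (intro laurent_polysI subring_add[OF RR] subring_mult[OF RR]
        smult_in_polys_over subring_polys_over)
  finally show ?thesis .
qed

lemma subring_laurent_polys:
  fixes s t :: "'a::field"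
  assumes R: "subring R" and st: "s \<noteq> 0" "t \<noteq> 0"
  shows "subring (laurent_polys R s t)"
proof -
  have RR: "subring (polys_over (polys_over R))"
    using R by (intro subring_polys_over)
  have "x * y \<in> laurent_polys R s t"
    if x: "x \<in> laurent_polys R s t" and y: "y \<in> laurent_polys R s t" for x y
  proof -
    obtain P L M where P: "P \<in> polys_over (polys_over R)" "x = poly2 P s t / (s ^ L * t ^ M)"
      using x by (rule laurent_polysE)
    obtain Q L' M' where Q: "Q \<in> polys_over (polys_over R)" "y = poly2 Q s t / (s ^ L' * t ^ M')"
      using y by (rule laurent_polysE)
    have "x * y = poly2 (P * Q) s t / (s ^ (L + L') * t ^ (M + M'))"
      by (simp add: P(2) Q(2) power_add)
    then show ?thesis
      using laurent_polysI[OF subring_mult[OF RR P(1) Q(1)]] by simp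
  qed
  moreover have "- x \<in> laurent_polys R s t" if x: "x \<in> laurent_polys R s t" for x
  proof -
    obtain P L M where "P \<in> polys_over (polys_over R)" "x = poly2 P s t / (s ^ L * t ^ M)"
      using x by (rule laurent_polysE)
    then show ?thesis
      using laurent_polysI[OF subring_uminus[OF RR], of P s t L M] by simp
  qed
  moreover have "1 \<in> laurent_polys R s t"
    using laurent_polysI[OF subring_one[OF RR], of s t 0 0] by simp
  ultimately show ?thesis
    using laurent_polys_add[OF R st] unfolding subring_def by blast
qed

lemma laurent_polys_commute:
  "subring R \<Longrightarrow> laurent_polys R s t = laurent_polys R t s"
proof -
  have swap: "laurent_polys R s t \<subseteq> laurent_polys R t s" if "subring R" for s t :: 'a
  proof
    fix y assume "y \<in> laurent_polys R s t"
    then obtain Q L M where "Q \<in> polys_over (polys_over R)" "y = poly2 Q s t / (s ^ L * t ^ M)"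
      by (elim laurent_polysE)
    then show "y \<in> laurent_polys R t s"
      using laurent_polysI[OF swap_vars_in_polys_over[OF that], of Q t s M L]
      by (simp add: poly2_swap_vars mult.commute)
  qed
  show "subring R \<Longrightarrow> laurent_polys R s t = laurent_polys R t s"
    using swap[of s t] swap[of t s] by blast
qed

lemma laurent_polys_generators:
  fixes s t :: "'a::field"
  assumes R: "subring R"
  shows "R \<subseteq> laurent_polys R s t" "s \<in> laurent_polys R s t" "t \<in> laurent_polys R s t"
    "inverse s \<in> laurent_polys R s t" "inverse t \<in> laurent_polys R s t"
proof -
  have P: "[:[:r:]:] \<in> polys_over (polys_over R)" if "r \<in> R" for r
    using R that by (simp add: pCons_in_polys_over_iff subring_zero subring_one subring_polys_over)
  have X: "[:0, 1:] \<in> polys_over (polys_over R)" "[:[:0, 1:]:] \<in> polys_over (polys_over R)"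
    using R by (simp_all add: pCons_in_polys_over_iff subring_zero subring_one subring_polys_over)
  show "R \<subseteq> laurent_polys R s t"
    using laurent_polysI[OF P, of _ s t 0 0] by auto
  show "s \<in> laurent_polys R s t" "t \<in> laurent_polys R s t"
    using laurent_polysI[OF X(1), of s t 0 0] laurent_polysI[OF X(2), of s t 0 0] by simp_all
  show "inverse s \<in> laurent_polys R s t" "inverse t \<in> laurent_polys R s t"
    using laurent_polysI[OF P[OF subring_one[OF R]], of s t 1 0]
      laurent_polysI[OF P[OF subring_one[OF R]], of s t 0 1] by (simp_all add: inverse_eq_divide)
qed

lemma zp_alg_subset_laurent_polys:
  fixes s t :: "'a::field"
  assumes "s \<noteq> 0" "t \<noteq> 0"
  shows "zp_alg l1 l2 p1 p2 {s, inverse s, t, inverse t}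
      \<subseteq> laurent_polys (zp_alg l1 l2 p1 p2 {}) s t"
proof (rule zp_alg_least)
  show "subring (laurent_polys (zp_alg l1 l2 p1 p2 {}) s t)"
    by (intro subring_laurent_polys subring_zp_alg assms)
  show "{s, inverse s, t, inverse t} \<subseteq> laurent_polys (zp_alg l1 l2 p1 p2 {}) s t"
    using laurent_polys_generators(2-5)[OF subring_zp_alg[of l1 l2 p1 p2 "{}"], where s = s and t = t]
    by simp
qed (rule laurent_polys_generators(1)[OF subring_zp_alg])

lemma laurent_eq_clear_denominators:
  fixes s t w :: "'a::field"
  assumes R: "subring R" and ind: "alg_indep2 R s t" and W: "W \<in> polys_over R" "W \<noteq> 0"
    and PQ: "P \<in> polys_over (polys_over R)" "Q \<in> polys_over (polys_over R)"
    and w: "w = poly W t / s"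
    and eq: "poly2 Q s t / (s ^ L * t ^ M) = poly2 P w t / (w ^ K * t ^ M')"
  shows "smult (W ^ K * [:0, 1:] ^ M') (monom 1 (degree P) * Q)
       = smult ([:0, 1:] ^ M) (recip_subst (L + K + degree P) W P)"
    (is "?lhs = ?rhs")
proof -
  have s0: "s \<noteq> 0" and t0: "t \<noteq> 0"
    using alg_indep2_nonzero[OF R ind] by simp_all
  have "poly W t \<noteq> 0" by (rule alg_indep2_poly_nonzero[OF R ind W])
  then have ws: "w * s = poly W t" "w \<noteq> 0" using s0 by (simp_all add: w)
  have "poly2 Q s t * w ^ K * t ^ M' = poly2 P w t * s ^ L * t ^ M"
    using eq s0 t0 ws(2) by (simp add: field_simps)
  then have "(poly2 Q s t * w ^ K * t ^ M') * s ^ (K + degree P)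
      = (poly2 P w t * s ^ L * t ^ M) * s ^ (K + degree P)"
    by simp
  then have "poly2 Q s t * (w * s) ^ K * t ^ M' * s ^ degree P
      = s ^ (L + K + degree P) * poly2 P w t * t ^ M"
    by (simp add: power_add power_mult_distrib mult_ac)
  then have "poly2 ?lhs s t = poly2 ?rhs s t"
    using s0 by (simp add: ws(1) w poly2_recip_subst poly_monom mult_ac)
  then have "poly2 (?lhs - ?rhs) s t = 0"
    by simp
  moreover have "?lhs - ?rhs \<in> polys_over (polys_over R)"
    using R W(1) PQ
    by (intro subring_diff subring_polys_over smult_in_polys_over subring_mult subring_power
        X_in_polys_over monom_in_polys_over recip_subst_in_polys_over subring_one)
  ultimately have "?lhs - ?rhs = 0"
    by (intro alg_indep2D[OF ind])
  then show ?thesis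
    by simp
qed

text \<open>Comparing the coefficients of \<open>s ^ degree P\<close> in the identity above gives
  \<open>W^K X^M' Q_0 = X^M P_(L+K) W^(L+K)\<close>, where \<open>Q_0 = coeff Q 0\<close>, and \<open>W\<close> is prime
  to \<open>X\<close> because \<open>W(0) = 1\<close>.\<close>

lemma laurent_polys_const_coeff_dvd:
  fixes s t :: "'a::field"
  assumes R: "subring R" and ind: "alg_indep2 R s t"
    and W: "W \<in> polys_over R" "coeff W 0 = 1" and Q: "Q \<in> polys_over (polys_over R)"
    and y: "poly2 Q s t / (s ^ L * t ^ M) \<in> laurent_polys R (poly W t / s) t"
  shows "\<exists>g \<in> polys_over R. coeff Q 0 = W ^ L * g"
proof -
  have W0: "W \<noteq> 0" using W(2) by auto
  obtain P K M' where P: "P \<in> polys_over (polys_over R)"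
    and eq: "poly2 Q s t / (s ^ L * t ^ M) = poly2 P (poly W t / s) t / ((poly W t / s) ^ K * t ^ M')"
    using y by (rule laurent_polysE)
  define N where "N = L + K + degree P"
  have "coeff (smult (W ^ K * [:0, 1:] ^ M') (monom 1 (degree P) * Q)) (degree P)
      = coeff (smult ([:0, 1:] ^ M) (recip_subst N W P)) (N - (L + K))"
    using laurent_eq_clear_denominators[OF R ind W(1) W0 P Q refl eq] by (simp add: N_def)
  moreover have "coeff (smult ([:0, 1:] ^ M) (recip_subst N W P)) (N - (L + K))
      = W ^ K * ([:0, 1:] ^ M * (coeff P (L + K) * W ^ L))"
    using coeff_recip_subst[of "L + K" N W P] by (simp add: N_def power_add mult_ac)
  ultimately have "W ^ K * ([:0, 1:] ^ M' * coeff Q 0)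
      = W ^ K * ([:0, 1:] ^ M * (coeff P (L + K) * W ^ L))"
    by (simp add: coeff_monom_mult)
  then have "W ^ L dvd [:0, 1:] ^ M' * coeff Q 0"
    using W0 by simp
  then have "W ^ L dvd coeff Q 0"
    using W(2) by (intro dvd_of_dvd_X_power_mult[of "W ^ L" M' "coeff Q 0"])
      (simp_all add: poly_0_coeff_0 coeff_0_power)
  then obtain g where g: "coeff Q 0 = W ^ L * g" by (rule dvdE)
  have "g \<in> polys_over R"
  proof (rule polys_over_cancel_left[OF R])
    show "W ^ L \<in> polys_over R" by (intro subring_power subring_polys_over R W(1))
    show "W ^ L * g \<in> polys_over R" using coeff_in_polys_over[OF Q, of 0] by (simp only: g)
  qed (simp add: coeff_0_power W(2))
  with g show ?thesis by blast
qed

lemma poly2_pCons_divide: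
  fixes s t :: "'a::field"
  assumes "s \<noteq> 0" "t \<noteq> 0"
  shows "poly2 (pCons (W ^ Suc n * g) Q) s t / (s ^ Suc n * t ^ M)
    = (poly W t / s) ^ Suc n * poly g t / t ^ M + poly2 Q s t / (s ^ n * t ^ M)"
  using assms by (simp add: field_simps)

text \<open>The reflection identity turns the pole of \<open>F(c)\<close> at \<open>d = 0\<close>
  into the factor \<open>H(d) = b e\<close>, which cancels the denominator \<open>b\<close>.\<close>

lemma third_exchange_in_subring:
  fixes d e :: "'a::field"
  assumes S: "subring S" "R \<subseteq> S"
    and de: "d \<in> S" "e \<in> S" "inverse d \<in> S" "inverse e \<in> S" "d \<noteq> 0"
    and FGH: "F \<in> polys_over R" "G \<in> polys_over R" "H \<in> polys_over R" "coeff G 0 = 1"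
    and u: "u \<in> R" and reflect: "\<And>z. z \<noteq> 0 \<Longrightarrow> z ^ l * poly F (inverse z) = u * poly H z"
    and b: "b = poly H d / e" "b \<noteq> 0" and c: "c = poly G b / d"
  shows "poly F c / b \<in> S"
proof -
  have bS: "b \<in> S"
    unfolding b(1) divide_inverse using S FGH(3) de by (intro subring_mult poly_in_subring)
  obtain w1 where w1: "w1 \<in> S" "poly G (0 + b) = poly G 0 + b * w1"
    using poly_add_arg_in_subring[OF S FGH(2) subring_zero[OF S(1)] bS] by blast
  have "c = inverse d + b * (w1 * inverse d)"
    using w1(2) FGH(4) de(5) by (simp add: c poly_0_coeff_0 field_simps)
  moreover obtain w3 where w3: "w3 \<in> S"
    "poly F (inverse d + b * (w1 * inverse d)) = poly F (inverse d) + b * (w1 * inverse d) * w3"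
    using poly_add_arg_in_subring[OF S FGH(1) de(3)
        subring_mult[OF S(1) bS subring_mult[OF S(1) w1(1) de(3)]]]
    by blast
  moreover have "poly F (inverse d) = u * b * e * inverse d ^ l"
    using reflect[OF de(5)] b de(5) by (simp add: field_simps)
  ultimately have "poly F c / b = u * e * inverse d ^ l + w1 * inverse d * w3"
    using b(2) by (simp add: field_simps)
  also have "\<dots> \<in> S"
    using S u de w1(1) w3(1) by (intro subring_add subring_mult subring_power) auto
  finally show ?thesis .
qed


section \<open>The triple intersection of Laurent rings in rank two\<close>

locale rank2_bounds =
  fixes R S :: "'a::field set" and a b c d :: 'a and F G :: "'a poly"
  assumes subring_R: "subring R" and indep: "alg_indep2 R a b"
    and F: "F \<in> polys_over R" "coeff F 0 = 1" and G: "G \<in> polys_over R" "coeff G 0 = 1"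
    and c_eq: "c = poly F a / b" and d_eq: "d = poly G b / a"
    and subring_S: "subring S" and R_subset_S: "R \<subseteq> S"
    and in_S: "a \<in> S" "b \<in> S" "c \<in> S" "d \<in> S"
    and S_subset: "S \<subseteq> laurent_polys R c a" "S \<subseteq> laurent_polys R b d"
begin

lemma alg_indep2_ba: "alg_indep2 R b a"
  by (rule alg_indep2_commute[OF subring_R indep])

lemma abcd_nonzero: "a \<noteq> 0" "b \<noteq> 0" "c \<noteq> 0" "d \<noteq> 0"
proof -
  show a0: "a \<noteq> 0" and b0: "b \<noteq> 0" using alg_indep2_nonzero[OF subring_R indep] by simp_all
  have "poly F a \<noteq> 0" using F by (intro alg_indep2_poly_nonzero[OF subring_R alg_indep2_ba]) auto
  then show "c \<noteq> 0" using b0 by (simp add: c_eq)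
  have "poly G b \<noteq> 0" using G by (intro alg_indep2_poly_nonzero[OF subring_R indep]) auto
  then show "d \<noteq> 0" using a0 by (simp add: d_eq)
qed

lemma subring_laurent_polys_ca: "subring (laurent_polys R c a)"
  and subring_laurent_polys_bd: "subring (laurent_polys R b d)"
  using abcd_nonzero by (simp_all add: subring_laurent_polys subring_R)

lemma b_power_denominator_in_S:
  assumes "Q \<in> polys_over (polys_over R)" "poly2 Q b a / b ^ M \<in> laurent_polys R c a"
  shows "poly2 Q b a / b ^ M \<in> S"
  using assms
proof (induction M arbitrary: Q)
  case 0
  then show ?case
    using poly2_in_subring[OF subring_S R_subset_S _ in_S(2,1)] by simp
next
  case (Suc M)
  obtain g where g: "g \<in> polys_over R" "coeff Q 0 = F ^ Suc M * g"
    using laurent_polys_const_coeff_dvd[OF subring_R alg_indep2_ba F Suc.prems(1), of "Suc M" 0]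
      Suc.prems(2)
    by (auto simp: c_eq)
  obtain Q1 where Q: "Q = pCons (F ^ Suc M * g) Q1"
    using g(2) by (metis coeff_pCons_0 pCons_cases)
  have Q1: "Q1 \<in> polys_over (polys_over R)"
    using Suc.prems(1) by (simp add: Q pCons_in_polys_over_iff)
  define z where "z = c ^ Suc M * poly g a"
  have y: "poly2 Q b a / b ^ Suc M = z + poly2 Q1 b a / b ^ M"
    using poly2_pCons_divide[OF abcd_nonzero(2,1), of F M g Q1 0] by (simp add: Q z_def c_eq)
  have z: "z \<in> S"
    unfolding z_def using subring_S R_subset_S g(1) in_S
    by (intro subring_mult subring_power poly_in_subring[of S R]) auto
  have "poly2 Q1 b a / b ^ M \<in> laurent_polys R c a"
    using subring_diff[OF subring_laurent_polys_ca Suc.prems(2) S_subset(1)[THEN subsetD, OF z]]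
    unfolding y by simp
  then have "poly2 Q1 b a / b ^ M \<in> S"
    by (rule Suc.IH[OF Q1])
  then show ?case
    unfolding y by (rule subring_add[OF subring_S z])
qed

definition pole_le :: "nat \<Rightarrow> 'a set" where
  "pole_le L = {poly2 Q a b / (a ^ L * b ^ M) | Q M. Q \<in> polys_over (polys_over R)}"

lemma pole_leI: "Q \<in> polys_over (polys_over R) \<Longrightarrow> poly2 Q a b / (a ^ L * b ^ M) \<in> pole_le L"
  unfolding pole_le_def by blast

lemma pole_le_add:
  assumes "y \<in> pole_le L" "z \<in> pole_le L"
  shows "y + z \<in> pole_le L"
proof -
  obtain P M where P: "P \<in> polys_over (polys_over R)" "y = poly2 P a b / (a ^ L * b ^ M)"
    using assms(1) unfolding pole_le_def by blast
  obtain Q N where Q: "Q \<in> polys_over (polys_over R)" "z = poly2 Q a b / (a ^ L * b ^ N)"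
    using assms(2) unfolding pole_le_def by blast
  have "smult ([:0, 1:] ^ N) P + smult ([:0, 1:] ^ M) Q \<in> polys_over (polys_over R)"
    using subring_R P(1) Q(1)
    by (intro subring_add smult_in_polys_over subring_polys_over subring_power X_in_polys_over)
  then show ?thesis
    unfolding P(2) Q(2) poly2_divide_add[OF abcd_nonzero(1,2)] by (rule pole_leI)
qed

lemma d_power_div_b_power:
  assumes "poly F a ^ n = 1 + a * poly \<phi> a"
  shows "d ^ Suc L / b ^ n = c ^ n * d ^ Suc L - poly \<phi> a * poly G b ^ Suc L / (a ^ L * b ^ n)"
proof -
  have "c ^ n * d ^ Suc L = (1 + a * poly \<phi> a) * poly G b ^ Suc L / (b ^ n * a ^ Suc L)"
    unfolding c_eq d_eq assms[symmetric] by (simp add: power_divide)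
  also have "\<dots> = d ^ Suc L / b ^ n + poly \<phi> a * poly G b ^ Suc L / (a ^ L * b ^ n)"
    using abcd_nonzero(1,2) by (simp add: d_eq field_simps)
  finally show ?thesis by simp
qed

lemma d_power_div_b_power_reduction:
  assumes "r \<in> R"
  shows "r * (d ^ Suc L / b ^ n) - r * c ^ n * d ^ Suc L \<in> pole_le L"
proof -
  obtain \<phi> where \<phi>: "\<phi> \<in> polys_over R" "F ^ n = pCons 1 \<phi>"
    using power_eq_pCons_one[OF subring_R F] by blast
  have "poly F a ^ n = 1 + a * poly \<phi> a"
    using arg_cong[OF \<phi>(2), of "\<lambda>p. poly p a"] by simp
  note key = d_power_div_b_power[OF this, of L]
  define Q where "Q = smult (smult (- r) (G ^ Suc L)) (map_poly (\<lambda>c. [:c:]) \<phi>)"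
  have "r * (d ^ Suc L / b ^ n) - r * c ^ n * d ^ Suc L
      = - (r * poly G b ^ Suc L * poly \<phi> a) / (a ^ L * b ^ n)"
    unfolding key using abcd_nonzero(1,2) by (simp add: field_simps)
  also have "\<dots> = poly2 Q a b / (a ^ L * b ^ n)"
    by (simp add: Q_def poly2_map_poly_const)
  finally have "r * (d ^ Suc L / b ^ n) - r * c ^ n * d ^ Suc L = poly2 Q a b / (a ^ L * b ^ n)" .
  moreover have "Q \<in> polys_over (polys_over R)"
    unfolding Q_def using subring_R assms G(1) \<phi>(1)
    by (intro smult_in_polys_over subring_polys_over subring_uminus subring_power
        map_poly_const_in_polys_over)
  ultimately show ?thesis
    by (simp add: pole_leI)
qed

lemma d_power_reduction:
  "h \<in> polys_over R \<Longrightarrow> \<exists>s\<in>S. d ^ Suc L * poly h b / b ^ k - s \<in> pole_le L"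
proof (induction k arbitrary: h)
  case 0
  have "d ^ Suc L * poly h b \<in> S"
    using subring_S R_subset_S 0 in_S by (intro subring_mult subring_power poly_in_subring[of S R]) auto
  moreover have "0 \<in> pole_le L"
    using pole_leI[OF subring_zero[OF subring_polys_over[OF subring_polys_over[OF subring_R]]]] by simp
  ultimately show ?case
    by (intro bexI[of _ "d ^ Suc L * poly h b"]) simp_all
next
  case (Suc k)
  obtain r h' where h: "h = pCons r h'" by (cases h)
  have r: "r \<in> R" and h': "h' \<in> polys_over R"
    using Suc.prems by (simp_all add: h pCons_in_polys_over_iff)
  obtain s where s: "s \<in> S" "d ^ Suc L * poly h' b / b ^ k - s \<in> pole_le L"
    using Suc.IH[OF h'] by blast
  have "d ^ Suc L * poly h b / b ^ Suc k - (r * c ^ Suc k * d ^ Suc L + s)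
      = (r * (d ^ Suc L / b ^ Suc k) - r * c ^ Suc k * d ^ Suc L) + (d ^ Suc L * poly h' b / b ^ k - s)"
    using abcd_nonzero(2) by (simp add: h field_simps)
  also have "\<dots> \<in> pole_le L"
    by (intro pole_le_add d_power_div_b_power_reduction r s(2))
  finally have "d ^ Suc L * poly h b / b ^ Suc k - (r * c ^ Suc k * d ^ Suc L + s) \<in> pole_le L" .
  moreover have "r * c ^ Suc k * d ^ Suc L + s \<in> S"
    using subring_S R_subset_S r in_S s(1) by (intro subring_add subring_mult subring_power) auto
  ultimately show ?case
    by blast
qed

lemma a_power_reduction:
  assumes Q: "Q \<in> polys_over (polys_over R)"
    and y: "poly2 Q a b / (a ^ Suc L * b ^ M) \<in> laurent_polys R b d"
  shows "\<exists>s\<in>S. poly2 Q a b / (a ^ Suc L * b ^ M) - s \<in> pole_le L"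
proof -
  have "poly2 Q a b / (a ^ Suc L * b ^ M) \<in> laurent_polys R (poly G b / a) b"
    using y laurent_polys_commute[OF subring_R, of b d] by (simp add: d_eq)
  then obtain g where g: "g \<in> polys_over R" "coeff Q 0 = G ^ Suc L * g"
    using laurent_polys_const_coeff_dvd[OF subring_R indep G Q] by blast
  obtain Q' where Q': "Q = pCons (G ^ Suc L * g) Q'"
    using g(2) by (metis coeff_pCons_0 pCons_cases)
  obtain s where s: "s \<in> S" "d ^ Suc L * poly g b / b ^ M - s \<in> pole_le L"
    using d_power_reduction[OF g(1)] by blast
  have "poly2 Q a b / (a ^ Suc L * b ^ M) - s
      = (d ^ Suc L * poly g b / b ^ M - s) + poly2 Q' a b / (a ^ L * b ^ M)"
    using poly2_pCons_divide[OF abcd_nonzero(1,2), of G L g Q' M] by (simp add: Q' d_eq)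
  also have "\<dots> \<in> pole_le L"
    using Q by (intro pole_le_add s(2) pole_leI) (simp add: Q' pCons_in_polys_over_iff)
  finally show ?thesis
    using s(1) by blast
qed

lemma pole_le_in_S:
  "y \<in> pole_le L \<Longrightarrow> y \<in> laurent_polys R c a \<Longrightarrow> y \<in> laurent_polys R b d \<Longrightarrow> y \<in> S"
proof (induction L arbitrary: y)
  case 0
  then obtain Q M where Q: "Q \<in> polys_over (polys_over R)" "y = poly2 Q a b / (a ^ 0 * b ^ M)"
    unfolding pole_le_def by blast
  then have "y = poly2 (swap_vars Q) b a / b ^ M"
    by (simp add: poly2_swap_vars)
  then show ?case
    using b_power_denominator_in_S[OF swap_vars_in_polys_over[OF subring_R Q(1)]] 0(2)
    by simp
next
  case (Suc L)
  then obtain Q M where Q: "Q \<in> polys_over (polys_over R)" "y = poly2 Q a b / (a ^ Suc L * b ^ M)"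
    unfolding pole_le_def by blast
  then obtain s where s: "s \<in> S" "y - s \<in> pole_le L"
    using a_power_reduction Suc.prems(3) by blast
  have "y - s \<in> laurent_polys R c a" "y - s \<in> laurent_polys R b d"
    using Suc.prems(2,3) S_subset[THEN subsetD, OF s(1)]
    by (simp_all add: subring_diff subring_laurent_polys_ca subring_laurent_polys_bd)
  then have "y - s \<in> S"
    by (intro Suc.IH s(2))
  then show ?case
    using subring_add[OF subring_S _ s(1)] by fastforce
qed

theorem laurent_polys_triple_inter_subset:
  "laurent_polys R c a \<inter> laurent_polys R a b \<inter> laurent_polys R b d \<subseteq> S"
proof
  fix y assume y: "y \<in> laurent_polys R c a \<inter> laurent_polys R a b \<inter> laurent_polys R b d"
  then have "y \<in> laurent_polys R a b" by blast
  then obtain Q L M where "Q \<in> polys_over (polys_over R)" "y = poly2 Q a b / (a ^ L * b ^ M)"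
    by (rule laurent_polysE)
  then have "y \<in> pole_le L"
    by (simp add: pole_leI)
  with y show "y \<in> S"
    using pole_le_in_S by blast
qed

end


section \<open>Values of rational polynomials\<close>

lemma mono_eval_eq_prod:
  "finite T \<Longrightarrow> {i. e i \<noteq> 0} \<subseteq> T \<Longrightarrow> mono_eval v e = (\<Prod>i\<in>T. v i ^ e i)"
  unfolding mono_eval_def by (rule prod.mono_neutral_left) auto

lemma mono_eval_add:
  assumes "finite J" "{i. e i \<noteq> 0} \<subseteq> J" "{i. f i \<noteq> 0} \<subseteq> J"
  shows "mono_eval v (\<lambda>i. e i + f i) = mono_eval v e * mono_eval v f"
  using assms by (simp add: mono_eval_eq_prod[OF assms(1)] power_add prod.distrib subset_eq)

lemma mono_eval_fun_upd:
  assumes "finite J" "{i. e i \<noteq> 0} \<subseteq> J" "a \<notin> J"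
  shows "mono_eval v (e(a := n)) = mono_eval v e * v a ^ n"
proof -
  have "mono_eval v (e(a := n)) = (\<Prod>i\<in>insert a J. v i ^ (e(a := n)) i)"
    using assms by (intro mono_eval_eq_prod) auto
  also have "\<dots> = v a ^ n * (\<Prod>i\<in>J. v i ^ (e(a := n)) i)"
    using assms by simp
  also have "(\<Prod>i\<in>J. v i ^ (e(a := n)) i) = (\<Prod>i\<in>J. v i ^ e i)"
    using assms(3) by (intro prod.cong) auto
  finally have "mono_eval v (e(a := n)) = v a ^ n * (\<Prod>i\<in>J. v i ^ e i)" .
  moreover have "mono_eval v e = (\<Prod>i\<in>J. v i ^ e i)"
    by (rule mono_eval_eq_prod[OF assms(1,2)])
  ultimately show ?thesis
    by (simp only: mult.commute)
qed

lemma mono_eval_indicator: "mono_eval v (\<lambda>j. if j = i then 1 else 0) = v i"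
proof -
  have "{j. (if j = i then 1 else 0) \<noteq> (0::nat)} = {i}" by auto
  then show ?thesis by (simp add: mono_eval_def)
qed

lemma alg_indep_QD:
  assumes "alg_indep_Q I v" "finite S" "\<forall>e\<in>S. finite {i. e i \<noteq> 0} \<and> {i. e i \<noteq> 0} \<subseteq> I"
    "(\<Sum>e\<in>S. of_rat (c e) * mono_eval v e) = 0" "e \<in> S"
  shows "c e = 0"
  using assms unfolding alg_indep_Q_def by blast

lemma alg_indep_Q_reindexD:
  assumes ind: "alg_indep_Q I v" and D: "finite D" "inj_on Ef D"
    and supp: "\<And>x. x \<in> D \<Longrightarrow> finite {i. Ef x i \<noteq> 0} \<and> {i. Ef x i \<noteq> 0} \<subseteq> I"
    and sum: "(\<Sum>x\<in>D. of_rat (c x) * mono_eval v (Ef x)) = 0" and x: "x \<in> D"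
  shows "c x = 0"
proof -
  have "(\<Sum>g\<in>Ef ` D. of_rat (c (inv_into D Ef g)) * mono_eval v g) = 0"
    using sum D(2) by (simp add: sum.reindex)
  then have "c (inv_into D Ef (Ef x)) = 0"
    using D(1) supp x by (intro alg_indep_QD[OF ind, of "Ef ` D" "\<lambda>g. c (inv_into D Ef g)"]) auto
  then show ?thesis
    using D(2) x by simp
qed

lemma alg_indep_Q_nonzero:
  assumes "alg_indep_Q I v" "i \<in> I"
  shows "v i \<noteq> 0"
proof
  assume "v i = 0"
  then have "(\<Sum>x\<in>{i}. of_rat 1 * mono_eval v (\<lambda>j. if j = x then 1 else 0)) = 0"
    by (simp add: mono_eval_indicator)
  with assms have "(1::rat) = 0"
    by (intro alg_indep_Q_reindexD[of I v "{i}" "\<lambda>x j. if j = x then 1 else 0" "\<lambda>_. 1" i]) auto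
  then show False by simp
qed

definition rat_poly_vals :: "'i set \<Rightarrow> ('i \<Rightarrow> 'a::field_char_0) \<Rightarrow> 'a set" where
  "rat_poly_vals J v = {\<Sum>e\<in>E. of_rat (c e) * mono_eval v e | E c.
     finite E \<and> (\<forall>e\<in>E. {i. e i \<noteq> 0} \<subseteq> J)}"

lemma rat_poly_vals_sum_image:
  assumes "finite A" "\<And>x. x \<in> A \<Longrightarrow> {i. Ef x i \<noteq> 0} \<subseteq> J"
  shows "(\<Sum>x\<in>A. of_rat (c x) * mono_eval v (Ef x)) \<in> rat_poly_vals J v"
proof -
  define c' where "c' e = (\<Sum>x\<in>{x\<in>A. Ef x = e}. c x)" for e
  have "(\<Sum>x\<in>A. of_rat (c x) * mono_eval v (Ef x)) =
      (\<Sum>e\<in>Ef ` A. \<Sum>x\<in>{x\<in>A. Ef x = e}. of_rat (c x) * mono_eval v (Ef x))"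
    by (rule sum.image_gen[OF assms(1)])
  also have "\<dots> = (\<Sum>e\<in>Ef ` A. of_rat (c' e) * mono_eval v e)"
    by (intro sum.cong refl) (simp add: c'_def of_rat_sum sum_distrib_right)
  finally show ?thesis
    unfolding rat_poly_vals_def using assms by (intro CollectI exI[of _ "Ef ` A"] exI[of _ c']) auto
qed

lemma subring_rat_poly_vals:
  assumes J: "finite J"
  shows "subring (rat_poly_vals J v)"
  unfolding subring_def
proof (intro conjI ballI)
  show "1 \<in> rat_poly_vals J v"
    using rat_poly_vals_sum_image[of "{()}" "\<lambda>_ _. 0" J "\<lambda>_. 1" v] by (simp add: mono_eval_def)
next
  fix x assume "x \<in> rat_poly_vals J v"
  then obtain E c where E: "finite E" "\<forall>e\<in>E. {i. e i \<noteq> 0} \<subseteq> J"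
    and x: "x = (\<Sum>e\<in>E. of_rat (c e) * mono_eval v e)"
    unfolding rat_poly_vals_def by blast
  have "- x = (\<Sum>e\<in>E. of_rat (- c e) * mono_eval v e)"
    by (simp add: x sum_negf of_rat_minus)
  then show "- x \<in> rat_poly_vals J v"
    using rat_poly_vals_sum_image[OF E(1), of "\<lambda>e. e" J "\<lambda>e. - c e" v] E(2) by simp
next
  fix x y assume "x \<in> rat_poly_vals J v" "y \<in> rat_poly_vals J v"
  then obtain E c F d where E: "finite E" "\<forall>e\<in>E. {i. e i \<noteq> 0} \<subseteq> J"
    and F: "finite F" "\<forall>e\<in>F. {i. e i \<noteq> 0} \<subseteq> J"
    and x: "x = (\<Sum>e\<in>E. of_rat (c e) * mono_eval v e)"
    and y: "y = (\<Sum>e\<in>F. of_rat (d e) * mono_eval v e)"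
    unfolding rat_poly_vals_def by blast
  have "x + y = (\<Sum>z\<in>E <+> F. of_rat (case_sum c d z) * mono_eval v (case_sum id id z))"
    using E(1) F(1) by (simp add: x y sum.Plus o_def)
  also have "\<dots> \<in> rat_poly_vals J v"
    using E F by (intro rat_poly_vals_sum_image) auto
  finally show "x + y \<in> rat_poly_vals J v" .
  have "x * y = (\<Sum>e\<in>E. \<Sum>f\<in>F. of_rat (c e) * mono_eval v e * (of_rat (d f) * mono_eval v f))"
    by (simp add: x y sum_product)
  also have "\<dots> = (\<Sum>z\<in>E \<times> F. of_rat (c (fst z) * d (snd z)) * mono_eval v (\<lambda>i. fst z i + snd z i))"
    unfolding sum.cartesian_product using E(2) F(2)
    by (intro sum.cong refl) (clarsimp simp: mono_eval_add[OF J] of_rat_mult mult_ac)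
  also have "\<dots> \<in> rat_poly_vals J v"
    using E F by (intro rat_poly_vals_sum_image) auto
  finally show "x * y \<in> rat_poly_vals J v" .
qed

lemma rat_poly_vals_var: "i \<in> J \<Longrightarrow> v i \<in> rat_poly_vals J v"
  using rat_poly_vals_sum_image[of "{i}" "\<lambda>x j. if j = x then 1 else 0" J "\<lambda>_. 1" v]
  by (simp add: mono_eval_indicator)

lemma rat_poly_vals_mono: "J \<subseteq> J' \<Longrightarrow> rat_poly_vals J v \<subseteq> rat_poly_vals J' v"
  unfolding rat_poly_vals_def by blast

lemma rat_poly_vals_family_obtain:
  assumes "\<And>i. s i \<in> rat_poly_vals J v"
  obtains E c where "\<And>i. finite (E i)" "\<And>i e. e \<in> E i \<Longrightarrow> {j. e j \<noteq> 0} \<subseteq> J"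
    "\<And>i. s i = (\<Sum>e\<in>E i. of_rat (c i e) * mono_eval v e)"
proof -
  define P where "P i Ec \<longleftrightarrow> finite (fst Ec) \<and> (\<forall>e\<in>fst Ec. {j. e j \<noteq> 0} \<subseteq> J) \<and>
      s i = (\<Sum>e\<in>fst Ec. of_rat (snd Ec e) * mono_eval v e)" for i Ec
  have "\<forall>i. \<exists>Ec. P i Ec"
    using assms unfolding rat_poly_vals_def P_def by fastforce
  then obtain Ec where "\<And>i. P i (Ec i)"
    using choice by blast
  then show ?thesis
    using that[of "\<lambda>i. fst (Ec i)" "\<lambda>i. snd (Ec i)"] by (simp add: P_def)
qed

lemma inj_on_fun_upd_pair:
  assumes "\<And>x. x \<in> D \<Longrightarrow> snd x a = 0"
  shows "inj_on (\<lambda>x. (snd x)(a := fst x)) D"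
proof (rule inj_onI)
  fix x y assume x: "x \<in> D" and y: "y \<in> D" and eq: "(snd x)(a := fst x) = (snd y)(a := fst y)"
  have "snd x j = snd y j" for j
    using fun_cong[OF eq, of j] assms[OF x] assms[OF y] by (cases "j = a") simp_all
  moreover have "fst x = fst y"
    using fun_cong[OF eq, of a] by simp
  ultimately show "x = y"
    by (simp add: prod_eq_iff fun_eq_iff)
qed

lemma alg_indep_Q_poly_coeff_eq_0:
  assumes ind: "alg_indep_Q I v" and J: "finite J" "J \<subseteq> I" and a: "a \<in> I" "a \<notin> J"
    and s: "\<And>i. s i \<in> rat_poly_vals J v" and sum: "(\<Sum>i\<le>n. s i * v a ^ i) = 0"
    and i: "i \<le> n"
  shows "s i = 0"
proof -
  obtain E c where E: "\<And>i. finite (E i)" "\<And>i e. e \<in> E i \<Longrightarrow> {j. e j \<noteq> 0} \<subseteq> J"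
    and s_eq: "\<And>i. s i = (\<Sum>e\<in>E i. of_rat (c i e) * mono_eval v e)"
    using rat_poly_vals_family_obtain[where s = s, OF s] by metis
  define D where "D = Sigma {..n} E"
  define Ef where "Ef x = (snd x)(a := fst x)" for x :: "nat \<times> _"
  have supp: "{j. snd x j \<noteq> 0} \<subseteq> J" if "x \<in> D" for x
  proof -
    have "snd x \<in> E (fst x)" using that by (auto simp: D_def)
    then show ?thesis by (rule E(2))
  qed
  have "snd x a = 0" if "x \<in> D" for x
    using supp[OF that] a(2) by auto
  then have "inj_on Ef D"
    unfolding Ef_def by (rule inj_on_fun_upd_pair)
  moreover have "(\<Sum>x\<in>D. of_rat (c (fst x) (snd x)) * mono_eval v (Ef x)) = 0"
  proof -
    have "(\<Sum>i\<le>n. s i * v a ^ i) = (\<Sum>i\<le>n. \<Sum>e\<in>E i. of_rat (c i e) * mono_eval v (Ef (i, e)))"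
      using J(1) E(2) a(2) by (simp add: s_eq Ef_def sum_distrib_right mono_eval_fun_upd mult.assoc)
    also have "\<dots> = (\<Sum>x\<in>D. of_rat (c (fst x) (snd x)) * mono_eval v (Ef x))"
      unfolding D_def using E(1) by (simp add: sum.Sigma split_beta)
    finally show ?thesis using sum by simp
  qed
  moreover have "finite {j. Ef x j \<noteq> 0} \<and> {j. Ef x j \<noteq> 0} \<subseteq> I" if "x \<in> D" for x
  proof -
    have "{j. Ef x j \<noteq> 0} \<subseteq> insert a J"
      using supp[OF that] by (auto simp: Ef_def)
    then show ?thesis using J a(1) by (auto intro: finite_subset)
  qed
  moreover have "finite D"
    using E(1) by (simp add: D_def)
  ultimately have "c i e = 0" if "e \<in> E i" for e
    using alg_indep_Q_reindexD[OF ind, of D Ef "\<lambda>x. c (fst x) (snd x)" "(i, e)"] i that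
    by (simp add: D_def)
  then show "s i = 0"
    by (simp add: s_eq)
qed

lemma alg_indep_Q_poly2_coeff_eq_0:
  assumes ind: "alg_indep_Q I v" and J: "finite J" "J \<subseteq> I"
    and ab: "a \<in> I" "b \<in> I" "a \<notin> J" "b \<notin> J" "a \<noteq> b"
    and s: "\<And>i j. s i j \<in> rat_poly_vals J v"
    and sum: "(\<Sum>i\<le>m. \<Sum>j\<le>n. s i j * v a ^ i * v b ^ j) = 0"
    and ij: "i \<le> m" "j \<le> n"
  shows "s i j = 0"
proof -
  define t where "t i = (\<Sum>j\<le>n. s i j * v b ^ j)" for i
  have sub: "subring (rat_poly_vals (insert b J) v)"
    using J by (simp add: subring_rat_poly_vals)
  have "t i \<in> rat_poly_vals (insert b J) v" for i
    unfolding t_def using s rat_poly_vals_mono[of J "insert b J" v] rat_poly_vals_var[of b "insert b J" v]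
    by (intro subring_sum[OF sub] subring_mult[OF sub] subring_power[OF sub]) auto
  moreover have "(\<Sum>i\<le>m. t i * v a ^ i) = 0"
    using sum by (simp add: t_def sum_distrib_left sum_distrib_right mult_ac)
  ultimately have "t i = 0"
    using J ab by (intro alg_indep_Q_poly_coeff_eq_0[OF ind, of "insert b J" a t m i]) (simp_all add: ij)
  then show ?thesis
    using s ij(2) by (intro alg_indep_Q_poly_coeff_eq_0[OF ind J ab(2,4), of "\<lambda>j. s i j" n j])
      (simp_all add: t_def)
qed


section \<open>Exchange polynomials\<close>

lemma Ppol_reflect:
  fixes z :: "'a::field"
  assumes "z \<noteq> 0" "p l \<noteq> 0"
  shows "z ^ l * Ppol l p (inverse z) = p l * Pbar l p z"
proof -
  have "z ^ l * Ppol l p (inverse z) = z ^ l + (\<Sum>k=1..l. p k * (z ^ l / z ^ k))"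
    by (simp add: Ppol_def algebra_simps sum_distrib_left power_inverse divide_inverse)
  also have "\<dots> = z ^ l + (\<Sum>k=1..l. p k * z ^ (l - k))"
    using assms(1) by (intro arg_cong2[where f = "(+)"] refl sum.cong) (simp_all add: power_diff)
  finally show ?thesis
    using assms(2) by (simp add: Pbar_def)
qed

lemma Pbar_reflect:
  fixes z :: "'a::field"
  assumes "z \<noteq> 0" "p l \<noteq> 0"
  shows "z ^ l * Pbar l p (inverse z) = inverse (p l) * Ppol l p z"
proof -
  have "z ^ l * Pbar l p (inverse z) =
      (z ^ l / z ^ l + (\<Sum>k=1..l. p k * (z ^ l / z ^ (l - k)))) / p l"
    by (simp add: Pbar_def algebra_simps sum_distrib_left power_inverse divide_inverse)
  also have "\<dots> = (1 + (\<Sum>k=1..l. p k * z ^ k)) / p l"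
    using assms(1) by (intro arg_cong2[where f = "(/)"] arg_cong2[where f = "(+)"] refl sum.cong)
      (simp_all add: power_diff)
  finally show ?thesis
    by (simp add: Ppol_def divide_inverse mult.commute)
qed

definition Ppol_poly :: "nat \<Rightarrow> (nat \<Rightarrow> 'a::field) \<Rightarrow> 'a poly" where
  "Ppol_poly l p = 1 + (\<Sum>k=1..l. monom (p k) k)"

definition Pbar_poly :: "nat \<Rightarrow> (nat \<Rightarrow> 'a::field) \<Rightarrow> 'a poly" where
  "Pbar_poly l p = smult (inverse (p l)) (monom 1 l + (\<Sum>k=1..l. monom (p k) (l - k)))"

lemma poly_Ppol_poly [simp]: "poly (Ppol_poly l p) z = Ppol l p z"
  by (simp add: Ppol_poly_def Ppol_def poly_sum poly_monom)

lemma poly_Pbar_poly [simp]: "poly (Pbar_poly l p) z = Pbar l p z"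
  by (simp add: Pbar_poly_def Pbar_def poly_sum poly_monom field_simps)

lemma coeff_0_Ppol_poly: "coeff (Ppol_poly l p) 0 = 1"
  by (simp add: Ppol_poly_def coeff_sum)

lemma coeff_0_Pbar_poly:
  assumes "l \<ge> 1" "p l \<noteq> 0"
  shows "coeff (Pbar_poly l p) 0 = 1"
proof -
  have "(\<Sum>k=1..l. coeff (monom (p k) (l - k)) 0) = (\<Sum>k=1..l. if k = l then p k else 0)"
    by (intro sum.cong refl) auto
  also have "\<dots> = p l"
    using assms(1) by simp
  finally show ?thesis
    using assms by (simp add: Pbar_poly_def coeff_sum)
qed

lemma Ppol_poly_in_polys_over:
  "subring R \<Longrightarrow> (\<And>k. 1 \<le> k \<Longrightarrow> k \<le> l \<Longrightarrow> p k \<in> R) \<Longrightarrow> Ppol_poly l p \<in> polys_over R"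
  unfolding Ppol_poly_def
  by (intro subring_add subring_one subring_sum subring_polys_over monom_in_polys_over) auto

lemma Pbar_poly_in_polys_over:
  "subring R \<Longrightarrow> (\<And>k. 1 \<le> k \<Longrightarrow> k \<le> l \<Longrightarrow> p k \<in> R) \<Longrightarrow> inverse (p l) \<in> R \<Longrightarrow>
    Pbar_poly l p \<in> polys_over R"
  unfolding Pbar_poly_def
  by (intro smult_in_polys_over subring_add subring_sum subring_polys_over monom_in_polys_over
      subring_one) auto


section \<open>The rank 2 cluster algebra\<close>

locale rank2_cluster =
  fixes l1 l2 :: nat and p1 p2 :: "nat \<Rightarrow> 'a::field_char_0" and y1 y2 :: 'a
  assumes l1: "l1 \<ge> 1" and l2: "l2 \<ge> 1"
    and alg_indep: "alg_indep_Q (cvars l1 l2) (cval p1 p2 y1 y2)"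
begin

abbreviation R :: "'a set" where "R \<equiv> zp_alg l1 l2 p1 p2 {}"
abbreviation x :: "int \<Rightarrow> 'a" where "x \<equiv> xseq l1 l2 p1 p2 y1 y2"
abbreviation T :: "int \<Rightarrow> 'a set" where "T \<equiv> Tk l1 l2 p1 p2 y1 y2"

lemma p1_nonzero: "1 \<le> k \<Longrightarrow> k \<le> l1 \<Longrightarrow> p1 k \<noteq> 0"
  using alg_indep_Q_nonzero[OF alg_indep, of "PV1 k"] by (auto simp: cvars_def)

lemma p2_nonzero: "1 \<le> k \<Longrightarrow> k \<le> l2 \<Longrightarrow> p2 k \<noteq> 0"
  using alg_indep_Q_nonzero[OF alg_indep, of "PV2 k"] by (auto simp: cvars_def)

definition exch_poly :: "int \<Rightarrow> 'a poly" where
  "exch_poly k =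
     (if k mod 4 = 1 then Ppol_poly l1 p1 else if k mod 4 = 2 then Ppol_poly l2 p2
      else if k mod 4 = 3 then Pbar_poly l1 p1 else Pbar_poly l2 p2)"

lemma poly_exch_poly: "poly (exch_poly k) z = exch l1 l2 p1 p2 k z"
  by (simp add: exch_poly_def exch_def)

lemma exch_poly_in_polys_over: "exch_poly k \<in> polys_over R"
proof -
  have "Ppol_poly l1 p1 \<in> polys_over R" "Ppol_poly l2 p2 \<in> polys_over R"
    by (intro Ppol_poly_in_polys_over subring_zp_alg zp_alg.par1 zp_alg.par2; assumption)+
  moreover have "Pbar_poly l1 p1 \<in> polys_over R" "Pbar_poly l2 p2 \<in> polys_over R"
    using l1 l2 by (intro Pbar_poly_in_polys_over subring_zp_alg zp_alg.intros; simp)+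
  ultimately show ?thesis
    by (simp add: exch_poly_def)
qed

lemma coeff_0_exch_poly: "coeff (exch_poly k) 0 = 1"
  using l1 l2 p1_nonzero[of l1] p2_nonzero[of l2]
  by (simp add: exch_poly_def coeff_0_Ppol_poly coeff_0_Pbar_poly)

lemma exch_poly_nonzero: "exch_poly k \<noteq> 0"
  using coeff_0_exch_poly[of k] by auto

lemma exch_poly_periodic: "exch_poly (k + 4) = exch_poly k"
  by (simp add: exch_poly_def)

lemma exch_poly_reflect:
  "\<exists>l. \<exists>u\<in>R. \<forall>z. z \<noteq> 0 \<longrightarrow> z ^ l * poly (exch_poly k) (inverse z) = u * poly (exch_poly (k + 2)) z"
proof -
  have n: "p1 l1 \<noteq> 0" "p2 l2 \<noteq> 0"
    using l1 l2 p1_nonzero[of l1] p2_nonzero[of l2] by simp_all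
  have R: "p1 l1 \<in> R" "p2 l2 \<in> R" "inverse (p1 l1) \<in> R" "inverse (p2 l2) \<in> R"
    using l1 l2 by (auto intro: zp_alg.intros)
  have "k mod 4 = 0 \<or> k mod 4 = 1 \<or> k mod 4 = 2 \<or> k mod 4 = 3"
    by auto
  moreover have "(k + 2) mod 4 = (k mod 4 + 2) mod 4"
    by (simp add: mod_add_left_eq)
  ultimately show ?thesis
    using R Ppol_reflect[where p = p1 and l = l1, OF _ n(1)] Ppol_reflect[where p = p2 and l = l2, OF _ n(2)]
      Pbar_reflect[where p = p1 and l = l1, OF _ n(1)] Pbar_reflect[where p = p2 and l = l2, OF _ n(2)]
    by (auto simp: exch_poly_def)
qed

lemma xfwd_Suc: "xfwd l1 l2 p1 p2 y1 y2 (Suc n) =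
    (snd (xfwd l1 l2 p1 p2 y1 y2 n),
     exch l1 l2 p1 p2 (int n + 2) (snd (xfwd l1 l2 p1 p2 y1 y2 n)) / fst (xfwd l1 l2 p1 p2 y1 y2 n))"
  by (simp add: split_beta Let_def)

lemma xbwd_Suc: "xbwd l1 l2 p1 p2 y1 y2 (Suc n) =
    (exch l1 l2 p1 p2 (1 - int n) (fst (xbwd l1 l2 p1 p2 y1 y2 n)) / snd (xbwd l1 l2 p1 p2 y1 y2 n),
     fst (xbwd l1 l2 p1 p2 y1 y2 n))"
  by (simp add: split_beta Let_def)

lemma xfwd_fst: "fst (xfwd l1 l2 p1 p2 y1 y2 n) = x (int n + 1)"
  by (simp add: xseq_def)

lemma xfwd_snd: "snd (xfwd l1 l2 p1 p2 y1 y2 n) = x (int n + 2)"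
  using xfwd_fst[of "Suc n"] by (simp del: xfwd.simps add: xfwd_Suc ac_simps)

lemma xbwd_fst: "fst (xbwd l1 l2 p1 p2 y1 y2 n) = x (1 - int n)"
proof (cases n)
  case (Suc m)
  then have "\<not> 1 - int n \<ge> 1" "nat (1 - (1 - int n)) = n" by simp_all
  then show ?thesis by (simp del: xbwd.simps add: xseq_def)
qed (simp add: xseq_def)

lemma xbwd_snd: "snd (xbwd l1 l2 p1 p2 y1 y2 n) = x (2 - int n)"
proof (induction n)
  case 0
  then show ?case by (simp add: xseq_def)
next
  case (Suc n)
  then show ?case by (simp del: xbwd.simps add: xbwd_Suc xbwd_fst algebra_simps)
qed

lemma x_forward: "k \<ge> 2 \<Longrightarrow> x (k + 1) = poly (exch_poly k) (x k) / x (k - 1)"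
proof -
  assume "k \<ge> 2"
  define n where "n = nat (k - 2)"
  have k: "k = int n + 2" using \<open>k \<ge> 2\<close> by (simp add: n_def)
  have "x (k + 1) = snd (xfwd l1 l2 p1 p2 y1 y2 (Suc n))"
    using xfwd_snd[of "Suc n"] by (simp add: k)
  also have "\<dots> = poly (exch_poly k) (x k) / x (k - 1)"
    by (simp only: xfwd_Suc snd_conv) (simp add: xfwd_snd xfwd_fst k poly_exch_poly algebra_simps)
  finally show ?thesis .
qed

lemma x_backward: "k \<le> 1 \<Longrightarrow> x (k - 1) = poly (exch_poly k) (x k) / x (k + 1)"
proof -
  assume "k \<le> 1"
  define n where "n = nat (1 - k)"
  have k: "k = 1 - int n" using \<open>k \<le> 1\<close> by (simp add: n_def)
  have "x (k - 1) = fst (xbwd l1 l2 p1 p2 y1 y2 (Suc n))"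
    using xbwd_fst[of "Suc n"] by (simp add: k)
  also have "\<dots> = poly (exch_poly k) (x k) / x (k + 1)"
    by (simp only: xbwd_Suc fst_conv) (simp add: xbwd_snd xbwd_fst k poly_exch_poly algebra_simps)
  finally show ?thesis .
qed

definition coeff_vars :: "cvar set" where
  "coeff_vars = PV1 ` {1..l1} \<union> PV2 ` {1..l2}"

abbreviation v :: "cvar \<Rightarrow> 'a" where "v \<equiv> cval p1 p2 y1 y2"

definition coeff_prod :: 'a where
  "coeff_prod = (\<Prod>i\<in>coeff_vars. v i)"

lemma finite_coeff_vars: "finite coeff_vars"
  by (simp add: coeff_vars_def)

lemma cvars_eq: "cvars l1 l2 = insert XV1 (insert XV2 coeff_vars)"
  by (auto simp: cvars_def coeff_vars_def)

lemma XV_notin_coeff_vars: "XV1 \<notin> coeff_vars" "XV2 \<notin> coeff_vars"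
  by (auto simp: coeff_vars_def)

lemma subring_coeff_polys: "subring (rat_poly_vals coeff_vars v)"
  by (rule subring_rat_poly_vals[OF finite_coeff_vars])

lemma coeff_prod_nonzero: "coeff_prod \<noteq> 0"
  using alg_indep_Q_nonzero[OF alg_indep] finite_coeff_vars
  by (simp add: coeff_prod_def cvars_eq)

lemma coeff_prod_in_coeff_polys: "coeff_prod \<in> rat_poly_vals coeff_vars v"
  unfolding coeff_prod_def by (intro subring_prod subring_coeff_polys rat_poly_vals_var)

lemma inverse_mult_coeff_prod: "i \<in> coeff_vars \<Longrightarrow> inverse (v i) * coeff_prod \<in> rat_poly_vals coeff_vars v"
proof -
  assume i: "i \<in> coeff_vars"
  have "inverse (v i) * coeff_prod = (\<Prod>j\<in>coeff_vars - {i}. v j)"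
    using i finite_coeff_vars alg_indep_Q_nonzero[OF alg_indep, of i]
    by (simp add: coeff_prod_def prod.remove cvars_eq)
  then show ?thesis
    by (auto intro!: subring_prod[OF subring_coeff_polys] rat_poly_vals_var)
qed

lemma zp_alg_clear_denominators: "r \<in> R \<Longrightarrow> \<exists>D. r * coeff_prod ^ D \<in> rat_poly_vals coeff_vars v"
proof (induction rule: zp_alg.induct)
  case one
  then show ?case using subring_one[OF subring_coeff_polys] by (intro exI[of _ 0]) simp
next
  case (par1 k)
  then show ?case using rat_poly_vals_var[of "PV1 k" coeff_vars v]
    by (intro exI[of _ 0]) (simp add: coeff_vars_def)
next
  case (par2 k)
  then show ?case using rat_poly_vals_var[of "PV2 k" coeff_vars v]
    by (intro exI[of _ 0]) (simp add: coeff_vars_def)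
next
  case (par1i k)
  then show ?case using inverse_mult_coeff_prod[of "PV1 k"]
    by (intro exI[of _ 1]) (simp add: coeff_vars_def)
next
  case (par2i k)
  then show ?case using inverse_mult_coeff_prod[of "PV2 k"]
    by (intro exI[of _ 1]) (simp add: coeff_vars_def)
next
  case (neg r)
  then obtain D where "r * coeff_prod ^ D \<in> rat_poly_vals coeff_vars v" by blast
  then show ?case using subring_uminus[OF subring_coeff_polys] by (intro exI[of _ D]) simp
next
  case (add r r')
  then obtain D D' where D: "r * coeff_prod ^ D \<in> rat_poly_vals coeff_vars v"
    "r' * coeff_prod ^ D' \<in> rat_poly_vals coeff_vars v" by blast
  have "(r * coeff_prod ^ D) * coeff_prod ^ D' + (r' * coeff_prod ^ D') * coeff_prod ^ D
      \<in> rat_poly_vals coeff_vars v"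
    using subring_coeff_polys D coeff_prod_in_coeff_polys
    by (meson subring_add subring_mult subring_power)
  then show ?case
    by (intro exI[of _ "D + D'"]) (simp add: power_add algebra_simps)
next
  case (mult r r')
  then obtain D D' where D: "r * coeff_prod ^ D \<in> rat_poly_vals coeff_vars v"
    "r' * coeff_prod ^ D' \<in> rat_poly_vals coeff_vars v" by blast
  then have "(r * coeff_prod ^ D) * (r' * coeff_prod ^ D') \<in> rat_poly_vals coeff_vars v"
    by (rule subring_mult[OF subring_coeff_polys])
  then show ?case
    by (intro exI[of _ "D + D'"]) (simp add: power_add mult_ac)
qed simp

lemma eventually_clear_denominators:
  assumes "r \<in> R"
  shows "eventually (\<lambda>D. r * coeff_prod ^ D \<in> rat_poly_vals coeff_vars v) sequentially"
proof -
  obtain D where D: "r * coeff_prod ^ D \<in> rat_poly_vals coeff_vars v"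
    using zp_alg_clear_denominators[OF assms] by blast
  have "r * coeff_prod ^ D' \<in> rat_poly_vals coeff_vars v" if "D' \<ge> D" for D'
  proof -
    have "(r * coeff_prod ^ D) * coeff_prod ^ (D' - D) \<in> rat_poly_vals coeff_vars v"
      using subring_coeff_polys D coeff_prod_in_coeff_polys by (meson subring_mult subring_power)
    then show ?thesis
      using that by (simp add: mult.assoc flip: power_add)
  qed
  then show ?thesis
    by (auto simp: eventually_sequentially)
qed

lemma alg_indep2_initial: "alg_indep2 R y1 y2"
  unfolding alg_indep2_def
proof (intro ballI impI)
  fix Q assume Q: "Q \<in> polys_over (polys_over R)" "poly2 Q y1 y2 = 0"
  define c where "c i j = coeff (coeff Q i) j" for i j
  have "\<forall>ij\<in>{..degree Q} \<times> {..inner_degree Q}.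
      eventually (\<lambda>D. c (fst ij) (snd ij) * coeff_prod ^ D \<in> rat_poly_vals coeff_vars v) sequentially"
    using Q(1) by (auto simp: c_def coeff_in_polys_over intro: eventually_clear_denominators)
  then have "eventually (\<lambda>D. \<forall>ij\<in>{..degree Q} \<times> {..inner_degree Q}.
      c (fst ij) (snd ij) * coeff_prod ^ D \<in> rat_poly_vals coeff_vars v) sequentially"
    by (intro eventually_ball_finite) simp_all
  then obtain D where D: "\<And>i j. i \<le> degree Q \<Longrightarrow> j \<le> inner_degree Q \<Longrightarrow>
      c i j * coeff_prod ^ D \<in> rat_poly_vals coeff_vars v"
    by (auto simp: eventually_sequentially)
  have outside: "c i j = 0" if "\<not> (i \<le> degree Q \<and> j \<le> inner_degree Q)" for i j
    using that degree_coeff_le_inner_degree[of Q i] by (auto simp: c_def coeff_eq_0)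
  have cleared: "c i j * coeff_prod ^ D \<in> rat_poly_vals coeff_vars v" for i j
    using D[of i j] outside[of i j] subring_zero[OF subring_coeff_polys]
    by (cases "i \<le> degree Q \<and> j \<le> inner_degree Q") auto
  have "(\<Sum>i\<le>degree Q. \<Sum>j\<le>inner_degree Q. (c i j * coeff_prod ^ D) * v XV1 ^ i * v XV2 ^ j)
      = coeff_prod ^ D * poly2 Q y1 y2"
    by (simp add: poly2_double_sum c_def sum_distrib_left mult_ac)
  also have "\<dots> = 0" using Q(2) by simp
  finally have sum: "(\<Sum>i\<le>degree Q. \<Sum>j\<le>inner_degree Q.
      (c i j * coeff_prod ^ D) * v XV1 ^ i * v XV2 ^ j) = 0" .
  have "c i j = 0" if "i \<le> degree Q" "j \<le> inner_degree Q" for i j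
  proof -
    have "c i j * coeff_prod ^ D = 0"
      by (rule alg_indep_Q_poly2_coeff_eq_0[OF alg_indep finite_coeff_vars _ _ _
            XV_notin_coeff_vars _ cleared sum that])
        (auto simp: cvars_eq)
    then show ?thesis using coeff_prod_nonzero by simp
  qed
  with outside show "Q = 0"
    unfolding c_def by (metis bipoly_eqI)
qed

lemma alg_indep2_consecutive: "alg_indep2 R (x m) (x (m + 1))"
proof (induction m rule: int_induct[where k = 1])
  case base
  then show ?case using alg_indep2_initial by (simp add: xseq_def)
next
  case (step1 i)
  have "x (i + 2) = poly (exch_poly (i + 1)) (x (i + 1)) / x i"
    using x_forward[of "i + 1"] step1(1) by (simp add: algebra_simps)
  then have "alg_indep2 R (x (i + 2)) (x (i + 1))"
    using alg_indep2_exchange[OF subring_zp_alg step1(2) exch_poly_in_polys_over exch_poly_nonzero] by simp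
  then show ?case
    using alg_indep2_commute[OF subring_zp_alg] by (simp add: algebra_simps)
next
  case (step2 i)
  have "x (i - 1) = poly (exch_poly i) (x i) / x (i + 1)"
    using x_backward[of i] step2(1) by simp
  moreover have "alg_indep2 R (x (i + 1)) (x i)"
    using alg_indep2_commute[OF subring_zp_alg step2(2)] .
  ultimately show ?case
    using alg_indep2_exchange[OF subring_zp_alg _ exch_poly_in_polys_over exch_poly_nonzero] by simp
qed

lemma x_nonzero: "x k \<noteq> 0"
  using alg_indep2_nonzero(1)[OF subring_zp_alg alg_indep2_consecutive] .

lemma x_exchange: "x (k + 1) * x (k - 1) = poly (exch_poly k) (x k)"
proof (cases "k \<ge> 2")
  case True
  then show ?thesis using x_forward x_nonzero[of "k - 1"] by simp
next
  case False
  then show ?thesis using x_backward[of k] x_nonzero[of "k + 1"] by simp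
qed

lemma x_next: "x (k + 1) = poly (exch_poly k) (x k) / x (k - 1)"
  and x_prev: "x (k - 1) = poly (exch_poly k) (x k) / x (k + 1)"
  using x_exchange[of k] x_nonzero[of "k - 1"] x_nonzero[of "k + 1"] by (simp_all add: field_simps)

lemma T_eq: "T k = zp_alg l1 l2 p1 p2 {x k, inverse (x k), x (k + 1), inverse (x (k + 1))}"
  by (simp add: Tk_def Let_def)

lemma subring_T: "subring (T k)"
  unfolding T_eq by (rule subring_zp_alg)

lemma R_subset_T: "R \<subseteq> T k"
  unfolding T_eq by (rule zp_alg_empty_subset)

lemma T_generators: "x k \<in> T k" "inverse (x k) \<in> T k" "x (k + 1) \<in> T k" "inverse (x (k + 1)) \<in> T k"
  unfolding T_eq by (auto intro: zp_alg.gen)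

lemma T_subset_laurent_polys: "T k \<subseteq> laurent_polys R (x k) (x (k + 1))"
  unfolding T_eq by (intro zp_alg_subset_laurent_polys x_nonzero)

lemma exch_in_T: "z \<in> T k \<Longrightarrow> poly (exch_poly i) z \<in> T k"
  by (rule poly_in_subring[OF subring_T R_subset_T exch_poly_in_polys_over])

lemma x_neighbours_in_T: "x (k - 1) \<in> T k" "x (k + 2) \<in> T k" "x (k - 2) \<in> T k" "x (k + 3) \<in> T k"
proof -
  have div: "u / w \<in> T k" if "u \<in> T k" "inverse w \<in> T k" for u w
    using subring_divide[OF subring_T that] .
  have exch: "poly (exch_poly i) z \<in> T k" if "z \<in> T k" for i z
    using exch_in_T[OF that] .
  note gens = T_generators[of k]
  show m1: "x (k - 1) \<in> T k"
    unfolding x_prev[of k] by (intro div exch gens)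
  show p2: "x (k + 2) \<in> T k"
    using x_next[of "k + 1"] div[OF exch[OF gens(3)] gens(2)] by (simp add: ac_simps)
  show "x (k - 2) \<in> T k"
    using x_prev[of "k - 1"] div[OF exch[OF m1] gens(2)] by simp
  show "x (k + 3) \<in> T k"
    using x_next[of "k + 2"] div[OF exch[OF p2] gens(4)] by (simp add: ac_simps)
qed

lemma x_minus_3_in_T: "x (k - 3) \<in> T k"
proof -
  obtain l u where u: "u \<in> R"
    and reflect: "\<And>z. z \<noteq> 0 \<Longrightarrow> z ^ l * poly (exch_poly (k - 2)) (inverse z) = u * poly (exch_poly k) z"
    using exch_poly_reflect[of "k - 2"] by auto
  have b: "x (k - 1) = poly (exch_poly k) (x k) / x (k + 1)"
    by (rule x_prev)
  have c: "x (k - 2) = poly (exch_poly (k - 1)) (x (k - 1)) / x k"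
    using x_prev[of "k - 1"] by simp
  have "poly (exch_poly (k - 2)) (x (k - 2)) / x (k - 1) \<in> T k"
    by (rule third_exchange_in_subring[OF subring_T R_subset_T T_generators(1,3,2,4) x_nonzero
          exch_poly_in_polys_over exch_poly_in_polys_over exch_poly_in_polys_over coeff_0_exch_poly
          u reflect b x_nonzero c])
  then show ?thesis
    using x_prev[of "k - 2"] by simp
qed

lemma x_plus_4_in_T: "x (k + 4) \<in> T k"
proof -
  obtain l u where u: "u \<in> R"
    and reflect: "\<And>z. z \<noteq> 0 \<Longrightarrow> z ^ l * poly (exch_poly (k + 3)) (inverse z) = u * poly (exch_poly (k + 1)) z"
    using exch_poly_reflect[of "k + 3"] exch_poly_periodic[of "k + 1"] by (auto simp: add.assoc)
  have b: "x (k + 2) = poly (exch_poly (k + 1)) (x (k + 1)) / x k"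
    using x_next[of "k + 1"] by (simp add: ac_simps)
  have c: "x (k + 3) = poly (exch_poly (k + 2)) (x (k + 2)) / x (k + 1)"
    using x_next[of "k + 2"] by (simp add: ac_simps)
  have "poly (exch_poly (k + 3)) (x (k + 3)) / x (k + 2) \<in> T k"
    by (rule third_exchange_in_subring[OF subring_T R_subset_T T_generators(3,1,4,2) x_nonzero
          exch_poly_in_polys_over exch_poly_in_polys_over exch_poly_in_polys_over coeff_0_exch_poly
          u reflect b x_nonzero c])
  then show ?thesis
    using x_next[of "k + 3"] by (simp add: ac_simps)
qed

lemma x_in_T:
  assumes "- 3 \<le> j" "j \<le> 4"
  shows "x (k + j) \<in> T k"
proof -
  have "j \<in> {-3, -2, -1, 0, 1, 2, 3, 4}"
    using assms by auto
  then show ?thesis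
    using x_minus_3_in_T x_neighbours_in_T T_generators(1,3) x_plus_4_in_T by auto
qed

definition lower_bound :: "int \<Rightarrow> 'a set" where
  "lower_bound m = zp_alg l1 l2 p1 p2 {x (m - 1), x m, x (m + 1), x (m + 2)}"

lemma subring_lower_bound: "subring (lower_bound m)"
  unfolding lower_bound_def by (rule subring_zp_alg)

lemma lower_bound_generators: "x (m - 1) \<in> lower_bound m" "x m \<in> lower_bound m"
    "x (m + 1) \<in> lower_bound m" "x (m + 2) \<in> lower_bound m"
  unfolding lower_bound_def by (auto intro: zp_alg.gen)

lemma lower_bound_subset_T:
  assumes "m - 2 \<le> k" "k \<le> m + 2"
  shows "lower_bound m \<subseteq> T k"
  unfolding lower_bound_def
proof (rule zp_alg_least[OF subring_T _ R_subset_T])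
  have "x (k + (i - k)) \<in> T k" if "m - 1 \<le> i" "i \<le> m + 2" for i
    using assms that by (intro x_in_T) simp_all
  then show "{x (m - 1), x m, x (m + 1), x (m + 2)} \<subseteq> T k"
    by simp
qed

lemma triple_inter_T_eq_lower_bound: "T (m - 1) \<inter> T m \<inter> T (m + 1) = lower_bound m"
proof
  show "lower_bound m \<subseteq> T (m - 1) \<inter> T m \<inter> T (m + 1)"
    using lower_bound_subset_T[of m] by simp
  interpret rank2_bounds R "lower_bound m" "x m" "x (m + 1)" "x (m - 1)" "x (m + 2)"
    "exch_poly m" "exch_poly (m + 1)"
  proof
    show "x (m - 1) = poly (exch_poly m) (x m) / x (m + 1)"
      by (rule x_prev)
    show "x (m + 2) = poly (exch_poly (m + 1)) (x (m + 1)) / x m"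
      using x_next[of "m + 1"] by (simp add: ac_simps)
    show "lower_bound m \<subseteq> laurent_polys R (x (m - 1)) (x m)"
      using lower_bound_subset_T[of m "m - 1"] T_subset_laurent_polys[of "m - 1"] by simp
    show "lower_bound m \<subseteq> laurent_polys R (x (m + 1)) (x (m + 2))"
      using lower_bound_subset_T[of m "m + 1"] T_subset_laurent_polys[of "m + 1"] by (simp add: ac_simps)
    show "R \<subseteq> lower_bound m"
      unfolding lower_bound_def by (rule zp_alg_empty_subset)
  qed (simp_all add: subring_zp_alg alg_indep2_consecutive exch_poly_in_polys_over coeff_0_exch_poly
      subring_lower_bound lower_bound_generators)
  have "T (m - 1) \<inter> T m \<inter> T (m + 1) \<subseteq>
      laurent_polys R (x (m - 1)) (x m) \<inter> laurent_polys R (x m) (x (m + 1))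
        \<inter> laurent_polys R (x (m + 1)) (x (m + 2))"
    using T_subset_laurent_polys[of "m - 1"] T_subset_laurent_polys[of m]
      T_subset_laurent_polys[of "m + 1"] by (auto simp: ac_simps)
  then show "T (m - 1) \<inter> T m \<inter> T (m + 1) \<subseteq> lower_bound m"
    using laurent_polys_triple_inter_subset by blast
qed

lemma lower_bound_Suc: "lower_bound (m + 1) = lower_bound m"
proof
  have "lower_bound m \<subseteq> T m \<inter> T (m + 1) \<inter> T (m + 2)"
    using lower_bound_subset_T[of m] by simp
  also have "\<dots> = lower_bound (m + 1)"
    using triple_inter_T_eq_lower_bound[of "m + 1"] by (simp add: add.assoc)
  finally show "lower_bound m \<subseteq> lower_bound (m + 1)" .
  have "lower_bound (m + 1) \<subseteq> T (m - 1) \<inter> T m \<inter> T (m + 1)"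
    using lower_bound_subset_T[of "m + 1"] by simp
  then show "lower_bound (m + 1) \<subseteq> lower_bound m"
    by (simp only: triple_inter_T_eq_lower_bound)
qed

lemma lower_bound_independent: "lower_bound m = lower_bound 0"
proof (induction m rule: int_induct[where k = 0])
  case (step2 i)
  then show ?case using lower_bound_Suc[of "i - 1"] by simp
qed (simp_all add: lower_bound_Suc)

lemma clusterA_eq_lower_bound: "clusterA l1 l2 p1 p2 y1 y2 = lower_bound m"
proof
  show "clusterA l1 l2 p1 p2 y1 y2 \<subseteq> lower_bound m"
    unfolding clusterA_def
  proof (rule zp_alg_least[OF subring_lower_bound])
    show "range x \<subseteq> lower_bound m"
      using lower_bound_generators(2) lower_bound_independent by (metis image_subsetI)
    show "R \<subseteq> lower_bound m"
      unfolding lower_bound_def by (rule zp_alg_empty_subset)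
  qed
  show "lower_bound m \<subseteq> clusterA l1 l2 p1 p2 y1 y2"
    unfolding clusterA_def lower_bound_def by (rule zp_alg_mono) auto
qed

end

theorem theoremA3:
  fixes l1 l2 :: nat and p1 p2 :: "nat \<Rightarrow> 'a::field_char_0" and y1 y2 :: 'a and m :: int
  assumes "l1 \<ge> 1" and "l2 \<ge> 1"
    and "alg_indep_Q (cvars l1 l2) (cval p1 p2 y1 y2)"
  shows "clusterA l1 l2 p1 p2 y1 y2 = (\<Inter>k. Tk l1 l2 p1 p2 y1 y2 k)
       \<and> clusterA l1 l2 p1 p2 y1 y2 =
           Tk l1 l2 p1 p2 y1 y2 (m - 1) \<inter> Tk l1 l2 p1 p2 y1 y2 m \<inter> Tk l1 l2 p1 p2 y1 y2 (m + 1)"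
proof -
  interpret rank2_cluster l1 l2 p1 p2 y1 y2
    using assms by unfold_locales
  have A: "clusterA l1 l2 p1 p2 y1 y2 = T (k - 1) \<inter> T k \<inter> T (k + 1)" for k
    using clusterA_eq_lower_bound triple_inter_T_eq_lower_bound by simp
  have "clusterA l1 l2 p1 p2 y1 y2 = (\<Inter>k. T k)"
  proof
    show "clusterA l1 l2 p1 p2 y1 y2 \<subseteq> (\<Inter>k. T k)"
      using A by blast
    show "(\<Inter>k. T k) \<subseteq> clusterA l1 l2 p1 p2 y1 y2"
      using A[of 0] by blast
  qed
  with A show ?thesis by blast
qed

end
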